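(* Let $G$ be a finite group and let $M,N$ be normal subgroups of $G$ with $1\neq M<N$. The following are equivalent: (1) every $g\in G\setminus N$ is conjugate in $G$ to every element of $gM$; (2) $|C_G(g)|=|C_{G/M}(Mg)|$ for every $g\in G\setminus N$; (3) for every $g\in G\setminus N$ we have $\chi(g)=0$ for all $\chi\in\mathrm{Irr}(G\mid M)$; (4) $V(G\mid M)\le N$; (5) for all $g\in G\setminus N$ and all $z\in M$ there exists $y\in G$ with $[g,y]=z$.
   Context: $\mathrm{Irr}(G)$ denotes the set of complex irreducible characters of $G$, and $\mathrm{Irr}(G\mid M)=\{\chi\in\mathrm{Irr}(G)\mid M\not\le\ker\chi\}$. The vanishing-off subgroup $V(G\mid M)$ is the subgroup of $G$ generated by all elements $g\in G$ such that $\chi(g)\neq 0$ for some $\chi\in\mathrm{Irr}(G\mid M)$. The commutator is $[g,y]=g^{-1}y^{-1}gy$. *)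

theory Defs
  imports "HOL-Algebra.Algebra" "Jordan_Normal_Form.Matrix"
begin

definition centralizer_of :: "('a, 'b) monoid_scheme \<Rightarrow> 'a \<Rightarrow> 'a set" where
  "centralizer_of G g = {x \<in> carrier G. x \<otimes>\<^bsub>G\<^esub> g = g \<otimes>\<^bsub>G\<^esub> x}"

definition is_rep :: "('a, 'b) monoid_scheme \<Rightarrow> nat \<Rightarrow> ('a \<Rightarrow> complex mat) \<Rightarrow> bool" where
  "is_rep G n \<rho> \<longleftrightarrow>
     (\<forall>g \<in> carrier G. \<rho> g \<in> carrier_mat n n) \<and>
     (\<forall>g \<in> carrier G. \<forall>h \<in> carrier G. \<rho> (g \<otimes>\<^bsub>G\<^esub> h) = \<rho> g * \<rho> h) \<and>
     \<rho> \<one>\<^bsub>G\<^esub> = 1\<^sub>m n"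

definition invariant_subspace :: "('a, 'b) monoid_scheme \<Rightarrow> nat \<Rightarrow> ('a \<Rightarrow> complex mat) \<Rightarrow> complex vec set \<Rightarrow> bool" where
  "invariant_subspace G n \<rho> W \<longleftrightarrow>
     W \<subseteq> carrier_vec n \<and> 0\<^sub>v n \<in> W \<and>
     (\<forall>v \<in> W. \<forall>w \<in> W. v + w \<in> W) \<and>
     (\<forall>c::complex. \<forall>v \<in> W. c \<cdot>\<^sub>v v \<in> W) \<and>
     (\<forall>g \<in> carrier G. \<forall>v \<in> W. \<rho> g *\<^sub>v v \<in> W)"

definition irreducible_rep :: "('a, 'b) monoid_scheme \<Rightarrow> nat \<Rightarrow> ('a \<Rightarrow> complex mat) \<Rightarrow> bool" where
  "irreducible_rep G n \<rho> \<longleftrightarrow> is_rep G n \<rho> \<and> n > 0 \<and>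
     (\<forall>W. invariant_subspace G n \<rho> W \<longrightarrow> W = {0\<^sub>v n} \<or> W = carrier_vec n)"

definition mat_trace :: "complex mat \<Rightarrow> complex" where
  "mat_trace A = (\<Sum>i<dim_row A. A $$ (i, i))"

definition Irr :: "('a, 'b) monoid_scheme \<Rightarrow> ('a \<Rightarrow> complex) set" where
  "Irr G = {\<chi>. \<exists>n \<rho>. irreducible_rep G n \<rho> \<and>
               \<chi> = (\<lambda>g. if g \<in> carrier G then mat_trace (\<rho> g) else 0)}"

definition char_ker :: "('a, 'b) monoid_scheme \<Rightarrow> ('a \<Rightarrow> complex) \<Rightarrow> 'a set" where
  "char_ker G \<chi> = {g \<in> carrier G. \<chi> g = \<chi> \<one>\<^bsub>G\<^esub>}"

definition Irr_rel :: "('a, 'b) monoid_scheme \<Rightarrow> 'a set \<Rightarrow> ('a \<Rightarrow> complex) set" where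
  "Irr_rel G M = {\<chi> \<in> Irr G. \<not> M \<subseteq> char_ker G \<chi>}"

definition vanishing_off :: "('a, 'b) monoid_scheme \<Rightarrow> 'a set \<Rightarrow> 'a set" where
  "vanishing_off G M = generate G {g \<in> carrier G. \<exists>\<chi> \<in> Irr_rel G M. \<chi> g \<noteq> 0}"

definition commutator_el :: "('a, 'b) monoid_scheme \<Rightarrow> 'a \<Rightarrow> 'a \<Rightarrow> 'a" where
  "commutator_el G g y = inv\<^bsub>G\<^esub> g \<otimes>\<^bsub>G\<^esub> inv\<^bsub>G\<^esub> y \<otimes>\<^bsub>G\<^esub> g \<otimes>\<^bsub>G\<^esub> y"

end

theory Submission
  imports Defs "Jordan_Normal_Form.Spectral_Radius"
begin

text \<open>
  The map \<open>y \<mapsto> y\<inverse> g y\<close> sends the preimage \<open>H\<close> of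
  \<open>C\<^bsub>G/M\<^esub>(Mg)\<close> onto \<open>g\<^sup>G \<inter> gM\<close>, with the cosets of \<open>C\<^bsub>G\<^esub>(g)\<close> as fibres, while
  \<open>|H| = |M| |C\<^bsub>G/M\<^esub>(Mg)|\<close>; hence \<open>gM \<subseteq> g\<^sup>G\<close> iff \<open>|C\<^bsub>G\<^esub>(g)| = |C\<^bsub>G/M\<^esub>(Mg)|\<close>.
  Condition (5) is (1) rewritten through \<open>y\<inverse> g y = g [g, y]\<close>, and (4) is (3) restated.

  For an irreducible representation \<open>R\<close>, Schur's lemma makes \<open>\<Sum>\<^sub>z\<^sub>\<in>\<^sub>M R(z)\<close> a scalar, so either
  \<open>M\<close> acts trivially or this sum vanishes, the latter exactly when the character lies in \<open>Irr(G|M)\<close>.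
  Under (1) each \<open>gz\<close> with \<open>z \<in> M\<close> is conjugate to \<open>g\<close>, so \<open>|M| \<chi>(g) = tr(R(g) \<Sum>\<^sub>z\<^sub>\<in>\<^sub>M R(z)) = 0\<close>.
  Conversely, under (3) every irreducible character takes the same value at \<open>g\<close> and at each
  \<open>h \<in> gM\<close>, and irreducible characters separate conjugacy classes. The separation is proved from
  scratch: class sums act as scalars on irreducible representations, a linear relation among the
  irreducible characters extends to all characters because characters are additive along invariant
  subspaces, and the character of the regular representation vanishes off the identity.
\<close>

section \<open>Matrices and traces\<close>

lemma carrier_vec_0_eq: "(v :: 'x :: zero vec) \<in> carrier_vec 0 \<Longrightarrow> v = 0\<^sub>v 0"
  by (intro eq_vecI) auto

lemma mult_mat_vec_zero: "A \<in> carrier_mat k n \<Longrightarrow> A *\<^sub>v 0\<^sub>v n = (0\<^sub>v k :: 'x :: semiring_0 vec)"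
  by (intro eq_vecI) (auto simp: scalar_prod_def)

lemma eq_matI_mult_vec:
  fixes A B :: "'x :: comm_ring_1 mat"
  assumes A: "A \<in> carrier_mat n m" and B: "B \<in> carrier_mat n m"
    and eq: "\<And>x. x \<in> carrier_vec m \<Longrightarrow> A *\<^sub>v x = B *\<^sub>v x"
  shows "A = B"
proof (rule eq_matI)
  fix i j assume i: "i < dim_row B" and j: "j < dim_col B"
  have "A $$ (i, j) = (A *\<^sub>v unit_vec m j) $ i"
    using A B i j by (simp add: scalar_prod_def unit_vec_def
        sum.cong[OF refl, of _ "\<lambda>k. if k = j then A $$ (i, k) else 0"] if_distrib cong: if_cong)
  also have "\<dots> = (B *\<^sub>v unit_vec m j) $ i" using eq[of "unit_vec m j"] by simp
  also have "\<dots> = B $$ (i, j)"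
    using B i j by (simp add: scalar_prod_def unit_vec_def
        sum.cong[OF refl, of _ "\<lambda>k. if k = j then B $$ (i, k) else 0"] if_distrib cong: if_cong)
  finally show "A $$ (i, j) = B $$ (i, j)" .
qed (use A B in auto)

lemma smult_one_mat_mult_vec: "(x :: complex vec) \<in> carrier_vec n \<Longrightarrow> (a \<cdot>\<^sub>m 1\<^sub>m n) *\<^sub>v x = a \<cdot>\<^sub>v x"
proof (rule eq_vecI)
  fix i assume x: "x \<in> carrier_vec n" and "i < dim_vec (a \<cdot>\<^sub>v x)"
  then have i: "i < n" by simp
  have "((a \<cdot>\<^sub>m 1\<^sub>m n) *\<^sub>v x) $ i = (\<Sum>j\<in>{0..<n}. a * (if j = i then 1 else 0) * x $ j)"
    using i x by (simp add: scalar_prod_def)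
  also have "\<dots> = (\<Sum>j\<in>{0..<n}. if j = i then a * x $ j else 0)"
    by (rule sum.cong) auto
  finally
  show "((a \<cdot>\<^sub>m 1\<^sub>m n) *\<^sub>v x) $ i = (a \<cdot>\<^sub>v x) $ i" using i x by simp
qed simp

lemma mult3_mat_vec:
  assumes "A \<in> carrier_mat n1 n2" "B \<in> carrier_mat n2 n3" "C \<in> carrier_mat n3 n4" "v \<in> carrier_vec n4"
  shows "(A * B * C) *\<^sub>v v = A *\<^sub>v (B *\<^sub>v (C *\<^sub>v (v :: 'x :: comm_ring_1 vec)))"
proof -
  have "(A * B * C) *\<^sub>v v = (A * B) *\<^sub>v (C *\<^sub>v v)" using assms by (intro assoc_mult_mat_vec) auto
  also have "\<dots> = A *\<^sub>v (B *\<^sub>v (C *\<^sub>v v))" using assms by (intro assoc_mult_mat_vec) auto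
  finally show ?thesis .
qed

lemma mat_trace_mult_comm:
  fixes A B :: "complex mat"
  assumes A: "A \<in> carrier_mat n m" and B: "B \<in> carrier_mat m n"
  shows "mat_trace (A * B) = mat_trace (B * A)"
proof -
  have "mat_trace (A * B) = (\<Sum>i<n. \<Sum>j<m. A $$ (i, j) * B $$ (j, i))"
    using A B by (simp add: mat_trace_def scalar_prod_def atLeast0LessThan)
  also have "\<dots> = (\<Sum>j<m. \<Sum>i<n. B $$ (j, i) * A $$ (i, j))"
    by (subst sum.swap) (simp add: mult.commute)
  also have "\<dots> = mat_trace (B * A)"
    using A B by (simp add: mat_trace_def scalar_prod_def atLeast0LessThan)
  finally show ?thesis .
qed

lemma mat_trace_add:
  "A \<in> carrier_mat n n \<Longrightarrow> B \<in> carrier_mat n n \<Longrightarrow> mat_trace (A + B) = mat_trace A + mat_trace B"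
  by (simp add: mat_trace_def sum.distrib)

lemma mat_trace_one: "mat_trace (1\<^sub>m n) = of_nat n"
  by (simp add: mat_trace_def)

lemma mat_trace_smult: "A \<in> carrier_mat n n \<Longrightarrow> mat_trace (c \<cdot>\<^sub>m A) = c * mat_trace A"
  by (simp add: mat_trace_def sum_distrib_left)

lemma mat_trace_resolution:
  assumes B: "B \<in> carrier_mat k j" and C: "C \<in> carrier_mat j k"
    and B': "B' \<in> carrier_mat k j'" and D: "D \<in> carrier_mat j' k" and A: "A \<in> carrier_mat k k"
    and resolution: "B * C + B' * D = 1\<^sub>m k"
  shows "mat_trace A = mat_trace (C * A * B) + mat_trace (D * A * B')"
proof -
  have "mat_trace A = mat_trace ((B * C + B' * D) * A)" using A by (simp add: resolution)
  also have "\<dots> = mat_trace (B * (C * A)) + mat_trace (B' * (D * A))"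
    using B C B' D A by (simp add: add_mult_distrib_mat[of _ k k] mat_trace_add[of _ k])
  also have "\<dots> = mat_trace (C * A * B) + mat_trace (D * A * B')"
    using B C B' D A by (simp add: mat_trace_mult_comm[of B k j] mat_trace_mult_comm[of B' k j'])
  finally show ?thesis .
qed

text \<open>Matrices of varying dimension form no monoid, so sums of matrices are taken entrywise.\<close>

definition mat_sum :: "nat \<Rightarrow> 'x set \<Rightarrow> ('x \<Rightarrow> complex mat) \<Rightarrow> complex mat" where
  "mat_sum n S f = mat n n (\<lambda>(i, j). \<Sum>x \<in> S. f x $$ (i, j))"

lemma mat_sum_carrier [simp]: "mat_sum n S f \<in> carrier_mat n n"
  by (simp add: mat_sum_def)

lemma mult_mat_sum_left:
  assumes A: "A \<in> carrier_mat n n" and f: "\<And>x. x \<in> S \<Longrightarrow> f x \<in> carrier_mat n n"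
  shows "A * mat_sum n S f = mat_sum n S (\<lambda>x. A * f x)"
proof (rule eq_matI)
  fix i j assume "i < dim_row (mat_sum n S (\<lambda>x. A * f x))" "j < dim_col (mat_sum n S (\<lambda>x. A * f x))"
  then have i: "i < n" and j: "j < n" by (auto simp: mat_sum_def)
  have "(A * mat_sum n S f) $$ (i, j) = (\<Sum>l \<in> {0..<n}. A $$ (i, l) * (\<Sum>x \<in> S. f x $$ (l, j)))"
    using i j A by (simp add: mat_sum_def scalar_prod_def)
  also have "\<dots> = (\<Sum>x \<in> S. \<Sum>l \<in> {0..<n}. A $$ (i, l) * f x $$ (l, j))"
    by (simp add: sum_distrib_left) (rule sum.swap)
  also have "\<dots> = mat_sum n S (\<lambda>x. A * f x) $$ (i, j)"
    using i j A by (auto simp: mat_sum_def scalar_prod_def dest!: f intro!: sum.cong)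
  finally show "(A * mat_sum n S f) $$ (i, j) = mat_sum n S (\<lambda>x. A * f x) $$ (i, j)" .
qed (use A in \<open>auto simp: mat_sum_def\<close>)

lemma mult_mat_sum_right:
  assumes A: "A \<in> carrier_mat n n" and f: "\<And>x. x \<in> S \<Longrightarrow> f x \<in> carrier_mat n n"
  shows "mat_sum n S f * A = mat_sum n S (\<lambda>x. f x * A)"
proof (rule eq_matI)
  fix i j assume "i < dim_row (mat_sum n S (\<lambda>x. f x * A))" "j < dim_col (mat_sum n S (\<lambda>x. f x * A))"
  then have i: "i < n" and j: "j < n" by (auto simp: mat_sum_def)
  have "(mat_sum n S f * A) $$ (i, j) = (\<Sum>l \<in> {0..<n}. (\<Sum>x \<in> S. f x $$ (i, l)) * A $$ (l, j))"
    using i j A by (simp add: mat_sum_def scalar_prod_def)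
  also have "\<dots> = (\<Sum>x \<in> S. \<Sum>l \<in> {0..<n}. f x $$ (i, l) * A $$ (l, j))"
    by (simp add: sum_distrib_right) (rule sum.swap)
  also have "\<dots> = mat_sum n S (\<lambda>x. f x * A) $$ (i, j)"
    using i j A by (auto simp: mat_sum_def scalar_prod_def dest!: f intro!: sum.cong)
  finally show "(mat_sum n S f * A) $$ (i, j) = mat_sum n S (\<lambda>x. f x * A) $$ (i, j)" .
qed (use A in \<open>auto simp: mat_sum_def\<close>)

lemma mat_sum_reindex: "bij_betw h S T \<Longrightarrow> mat_sum n S (\<lambda>x. f (h x)) = mat_sum n T f"
  unfolding mat_sum_def by (intro eq_matI) (auto intro: sum.reindex_bij_betw)

lemma mat_sum_cong: "(\<And>x. x \<in> S \<Longrightarrow> f x = g x) \<Longrightarrow> mat_sum n S f = mat_sum n S g"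
  unfolding mat_sum_def by (intro eq_matI) auto

lemma mat_trace_mat_sum:
  assumes "\<And>x. x \<in> S \<Longrightarrow> f x \<in> carrier_mat n n"
  shows "mat_trace (mat_sum n S f) = (\<Sum>x \<in> S. mat_trace (f x))"
proof -
  have "mat_trace (mat_sum n S f) = (\<Sum>i<n. \<Sum>x \<in> S. f x $$ (i, i))"
    by (simp add: mat_trace_def mat_sum_def)
  also have "\<dots> = (\<Sum>x \<in> S. mat_trace (f x))"
    using assms by (subst sum.swap) (auto simp: mat_trace_def intro!: sum.cong)
  finally show ?thesis .
qed

section \<open>Coordinates on subspaces\<close>

definition vec_subspace :: "nat \<Rightarrow> complex vec set \<Rightarrow> bool" where
  "vec_subspace n W \<longleftrightarrow> W \<subseteq> carrier_vec n \<and> 0\<^sub>v n \<in> W \<and>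
     (\<forall>v \<in> W. \<forall>w \<in> W. v + w \<in> W) \<and> (\<forall>c. \<forall>v \<in> W. c \<cdot>\<^sub>v v \<in> W)"

definition zero_extend_vec :: "complex vec \<Rightarrow> complex vec" where
  "zero_extend_vec v = vec (Suc (dim_vec v)) (\<lambda>i. if i < dim_vec v then v $ i else 0)"

lemma zero_extend_vec_carrier [simp]: "v \<in> carrier_vec m \<Longrightarrow> zero_extend_vec v \<in> carrier_vec (Suc m)"
  by (simp add: zero_extend_vec_def)

lemma zero_extend_vec_first: "w \<in> carrier_vec (Suc m) \<Longrightarrow> w $ m = 0 \<Longrightarrow> zero_extend_vec (vec_first w m) = w"
  by (intro eq_vecI) (auto simp: zero_extend_vec_def vec_first_def less_Suc_eq)

lemma vec_first_zero_extend: "v \<in> carrier_vec m \<Longrightarrow> vec_first (zero_extend_vec v) m = v"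
  by (intro eq_vecI) (auto simp: zero_extend_vec_def vec_first_def)

lemma vec_first_add:
  "v \<in> carrier_vec n \<Longrightarrow> w \<in> carrier_vec n \<Longrightarrow> m \<le> n \<Longrightarrow> vec_first (v + w) m = vec_first v m + vec_first w m"
  by (intro eq_vecI) (auto simp: vec_first_def)

lemma vec_first_smult: "v \<in> carrier_vec n \<Longrightarrow> m \<le> n \<Longrightarrow> vec_first (c \<cdot>\<^sub>v v) m = c \<cdot>\<^sub>v vec_first v m"
  by (intro eq_vecI) (auto simp: vec_first_def)

lemma vec_first_zero: "m \<le> n \<Longrightarrow> vec_first (0\<^sub>v n) m = 0\<^sub>v m"
  by (intro eq_vecI) (auto simp: vec_first_def)

lemma mult_vec_zero_row_extension:
  assumes B: "B \<in> carrier_mat m k" and y: "y \<in> carrier_vec k"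
  shows "mat (Suc m) k (\<lambda>(i, j). if i < m then B $$ (i, j) else 0) *\<^sub>v y = zero_extend_vec (B *\<^sub>v y)"
  using B y by (intro eq_vecI) (auto simp: zero_extend_vec_def scalar_prod_def intro!: sum.cong)

lemma mult_vec_zero_col_extension:
  assumes C: "C \<in> carrier_mat k m" and w: "w \<in> carrier_vec (Suc m)"
  shows "mat k (Suc m) (\<lambda>(i, j). if j < m then C $$ (i, j) else 0) *\<^sub>v w = C *\<^sub>v vec_first w m"
proof (rule eq_vecI)
  fix i assume "i < dim_vec (C *\<^sub>v vec_first w m)"
  with C have i: "i < k" by simp
  have "(mat k (Suc m) (\<lambda>(i, j). if j < m then C $$ (i, j) else 0) *\<^sub>v w) $ i
      = (\<Sum>j<Suc m. (if j < m then C $$ (i, j) else 0) * w $ j)"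
    using i w by (simp add: scalar_prod_def atLeast0LessThan)
  also have "\<dots> = (C *\<^sub>v vec_first w m) $ i"
    using i C by (simp add: scalar_prod_def vec_first_def atLeast0LessThan)
  finally show "(mat k (Suc m) (\<lambda>(i, j). if j < m then C $$ (i, j) else 0) *\<^sub>v w) $ i = (C *\<^sub>v vec_first w m) $ i" .
qed (use C in simp)

lemma mult_vec_col_extension:
  assumes B: "B \<in> carrier_mat m k" and u: "u \<in> carrier_vec (Suc m)" and y: "y \<in> carrier_vec (Suc k)"
  shows "mat (Suc m) (Suc k) (\<lambda>(i, j). if j < k then (if i < m then B $$ (i, j) else 0) else u $ i) *\<^sub>v y
     = zero_extend_vec (B *\<^sub>v vec_first y k) + y $ k \<cdot>\<^sub>v u"
proof (rule eq_vecI)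
  let ?B = "mat (Suc m) (Suc k) (\<lambda>(i, j). if j < k then (if i < m then B $$ (i, j) else 0) else u $ i)"
  fix i assume "i < dim_vec (zero_extend_vec (B *\<^sub>v vec_first y k) + y $ k \<cdot>\<^sub>v u)"
  with u have i: "i < Suc m" by simp
  have "(?B *\<^sub>v y) $ i = (\<Sum>j<k. (if i < m then B $$ (i, j) else 0) * y $ j) + u $ i * y $ k"
    using i y by (simp add: scalar_prod_def atLeast0LessThan)
  also have "\<dots> = (zero_extend_vec (B *\<^sub>v vec_first y k) + y $ k \<cdot>\<^sub>v u) $ i"
    using i B u y by (auto simp: zero_extend_vec_def vec_first_def scalar_prod_def atLeast0LessThan intro!: sum.cong)
  finally show "(?B *\<^sub>v y) $ i = (zero_extend_vec (B *\<^sub>v vec_first y k) + y $ k \<cdot>\<^sub>v u) $ i" .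
qed (use u in simp)

lemma mult_vec_bordered:
  fixes C :: "complex mat"
  assumes C: "C \<in> carrier_mat k m" and u: "u \<in> carrier_vec (Suc m)" and w: "w \<in> carrier_vec (Suc m)"
  shows "mat (Suc k) (Suc m) (\<lambda>(i, j). if i < k then (if j < m then C $$ (i, j) else - (C *\<^sub>v vec_first u m) $ i)
             else (if j = m then 1 else 0)) *\<^sub>v w
     = vec (Suc k) (\<lambda>i. if i < k then (C *\<^sub>v vec_first w m) $ i - w $ m * (C *\<^sub>v vec_first u m) $ i else w $ m)"
proof (rule eq_vecI)
  let ?C = "mat (Suc k) (Suc m) (\<lambda>(i, j). if i < k then (if j < m then C $$ (i, j) else - (C *\<^sub>v vec_first u m) $ i)
             else (if j = m then 1 else 0))"
  fix i assume "i < dim_vec (vec (Suc k) (\<lambda>i. if i < k then (C *\<^sub>v vec_first w m) $ i - w $ m * (C *\<^sub>v vec_first u m) $ i else w $ m))"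
  then have i: "i < Suc k" by simp
  have "(?C *\<^sub>v w) $ i = (\<Sum>j<m. ?C $$ (i, j) * w $ j) + ?C $$ (i, m) * w $ m"
    using i w by (simp add: scalar_prod_def atLeast0LessThan)
  moreover have "(\<Sum>j<m. ?C $$ (i, j) * w $ j) = (C *\<^sub>v vec_first w m) $ i" if "i < k"
    using that C by (auto simp: vec_first_def scalar_prod_def atLeast0LessThan intro!: sum.cong)
  ultimately show "(?C *\<^sub>v w) $ i = vec (Suc k) (\<lambda>i. if i < k then (C *\<^sub>v vec_first w m) $ i - w $ m * (C *\<^sub>v vec_first u m) $ i else w $ m) $ i"
    using i by (cases "i < k") (simp_all add: algebra_simps)
qed simp

definition coordinate_maps :: "nat \<Rightarrow> complex vec set \<Rightarrow> nat \<Rightarrow> complex mat \<Rightarrow> complex mat \<Rightarrow> bool" where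
  "coordinate_maps n W k B C \<longleftrightarrow> B \<in> carrier_mat n k \<and> C \<in> carrier_mat k n \<and>
     (\<forall>x \<in> carrier_vec k. C *\<^sub>v (B *\<^sub>v x) = x \<and> B *\<^sub>v x \<in> W) \<and> (\<forall>w \<in> W. B *\<^sub>v (C *\<^sub>v w) = w)"

lemma vec_subspace_truncate:
  assumes W: "vec_subspace (Suc m) W"
  shows "vec_subspace m {vec_first w m | w. w \<in> W \<and> w $ m = 0}"
  unfolding vec_subspace_def
proof (intro conjI ballI allI)
  have carrier: "W \<subseteq> carrier_vec (Suc m)" and zero: "0\<^sub>v (Suc m) \<in> W"
    and add: "\<And>v w. v \<in> W \<Longrightarrow> w \<in> W \<Longrightarrow> v + w \<in> W" and smult: "\<And>c v. v \<in> W \<Longrightarrow> c \<cdot>\<^sub>v v \<in> W"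
    using W unfolding vec_subspace_def by auto
  show "{vec_first w m | w. w \<in> W \<and> w $ m = 0} \<subseteq> carrier_vec m" by auto
  show "0\<^sub>v m \<in> {vec_first w m | w. w \<in> W \<and> w $ m = 0}"
    using zero by (intro CollectI exI[of _ "0\<^sub>v (Suc m)"]) (simp add: vec_first_zero)
  fix c v assume "v \<in> {vec_first w m | w. w \<in> W \<and> w $ m = 0}"
  then obtain v' where v': "v = vec_first v' m" "v' \<in> W" "v' $ m = 0" by auto
  have v'_carrier: "v' \<in> carrier_vec (Suc m)" using v' carrier by auto
  show "c \<cdot>\<^sub>v v \<in> {vec_first w m | w. w \<in> W \<and> w $ m = 0}"
    using v' v'_carrier smult[of v' c] by (intro CollectI exI[of _ "c \<cdot>\<^sub>v v'"]) (simp add: vec_first_smult)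
  fix w assume "w \<in> {vec_first w m | w. w \<in> W \<and> w $ m = 0}"
  then obtain w' where w': "w = vec_first w' m" "w' \<in> W" "w' $ m = 0" by auto
  have w'_carrier: "w' \<in> carrier_vec (Suc m)" using w' carrier by auto
  show "v + w \<in> {vec_first w m | w. w \<in> W \<and> w $ m = 0}"
    using v' w' v'_carrier w'_carrier add[of v' w']
    by (intro CollectI exI[of _ "v' + w'"]) (simp add: vec_first_add)
qed

lemma coordinate_maps_zero_last:
  assumes W: "W \<subseteq> carrier_vec (Suc m)" and last: "\<forall>w \<in> W. w $ m = 0"
    and coords: "coordinate_maps m {vec_first w m | w. w \<in> W \<and> w $ m = 0} k B0 C0"
  shows "coordinate_maps (Suc m) W k (mat (Suc m) k (\<lambda>(i, j). if i < m then B0 $$ (i, j) else 0))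
                                     (mat k (Suc m) (\<lambda>(i, j). if j < m then C0 $$ (i, j) else 0))"
  (is "coordinate_maps _ _ _ ?B ?C")
proof -
  have B0: "B0 \<in> carrier_mat m k" and C0: "C0 \<in> carrier_mat k m"
    and inv: "\<And>x. x \<in> carrier_vec k \<Longrightarrow> C0 *\<^sub>v (B0 *\<^sub>v x) = x"
    and range: "\<And>x. x \<in> carrier_vec k \<Longrightarrow> \<exists>w \<in> W. w $ m = 0 \<and> B0 *\<^sub>v x = vec_first w m"
    and retract: "\<And>w. w \<in> W \<Longrightarrow> B0 *\<^sub>v (C0 *\<^sub>v vec_first w m) = vec_first w m"
    using coords last unfolding coordinate_maps_def by blast+
  have Bx: "?B *\<^sub>v x = zero_extend_vec (B0 *\<^sub>v x)" if "x \<in> carrier_vec k" for x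
    using mult_vec_zero_row_extension[OF B0 that] .
  have Cw: "?C *\<^sub>v w = C0 *\<^sub>v vec_first w m" if "w \<in> carrier_vec (Suc m)" for w
    using mult_vec_zero_col_extension[OF C0 that] .
  show ?thesis
    unfolding coordinate_maps_def
  proof (intro conjI ballI)
    fix x :: "complex vec" assume x: "x \<in> carrier_vec k"
    show "?C *\<^sub>v (?B *\<^sub>v x) = x" using x B0 inv by (simp add: Bx Cw vec_first_zero_extend)
    obtain w where "w \<in> W" "w $ m = 0" "B0 *\<^sub>v x = vec_first w m" using range[OF x] by blast
    then show "?B *\<^sub>v x \<in> W" using x W by (auto simp: Bx zero_extend_vec_first)
  next
    fix w assume w: "w \<in> W"
    then show "?B *\<^sub>v (?C *\<^sub>v w) = w"
      using W C0 retract[OF w] last by (auto simp: Bx Cw zero_extend_vec_first)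
  qed auto
qed

lemma coordinate_maps_extend:
  assumes W: "vec_subspace (Suc m) W" and u: "u \<in> W" "u $ m = 1"
    and coords: "coordinate_maps m {vec_first w m | w. w \<in> W \<and> w $ m = 0} k B0 C0"
  shows "coordinate_maps (Suc m) W (Suc k)
     (mat (Suc m) (Suc k) (\<lambda>(i, j). if j < k then (if i < m then B0 $$ (i, j) else 0) else u $ i))
     (mat (Suc k) (Suc m) (\<lambda>(i, j). if i < k then (if j < m then C0 $$ (i, j) else - (C0 *\<^sub>v vec_first u m) $ i)
                                     else (if j = m then 1 else 0)))"
  (is "coordinate_maps _ _ _ ?B ?C")
proof -
  have carrier: "W \<subseteq> carrier_vec (Suc m)"
    and add: "\<And>v w. v \<in> W \<Longrightarrow> w \<in> W \<Longrightarrow> v + w \<in> W" and smult: "\<And>c v. v \<in> W \<Longrightarrow> c \<cdot>\<^sub>v v \<in> W"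
    using W unfolding vec_subspace_def by auto
  have B0: "B0 \<in> carrier_mat m k" and C0: "C0 \<in> carrier_mat k m"
    and inv: "\<And>x. x \<in> carrier_vec k \<Longrightarrow> C0 *\<^sub>v (B0 *\<^sub>v x) = x"
    and range: "\<And>x. x \<in> carrier_vec k \<Longrightarrow> \<exists>w \<in> W. w $ m = 0 \<and> B0 *\<^sub>v x = vec_first w m"
    and retract: "\<And>w. w \<in> W \<Longrightarrow> w $ m = 0 \<Longrightarrow> B0 *\<^sub>v (C0 *\<^sub>v vec_first w m) = vec_first w m"
    using coords unfolding coordinate_maps_def by blast+
  have u_carrier: "u \<in> carrier_vec (Suc m)" using u carrier by auto
  have range': "zero_extend_vec (B0 *\<^sub>v x) \<in> W" if "x \<in> carrier_vec k" for x
    using range[OF that] carrier zero_extend_vec_first by auto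
  have Bx: "?B *\<^sub>v y = zero_extend_vec (B0 *\<^sub>v vec_first y k) + y $ k \<cdot>\<^sub>v u" if "y \<in> carrier_vec (Suc k)" for y
    using mult_vec_col_extension[OF B0 u_carrier that] .
  have Cw: "?C *\<^sub>v w = vec (Suc k) (\<lambda>i. if i < k then (C0 *\<^sub>v vec_first w m) $ i - w $ m * (C0 *\<^sub>v vec_first u m) $ i else w $ m)"
    if "w \<in> carrier_vec (Suc m)" for w
    using mult_vec_bordered[OF C0 u_carrier that] .
  show ?thesis
    unfolding coordinate_maps_def
  proof (intro conjI ballI)
    fix x :: "complex vec" assume x: "x \<in> carrier_vec (Suc k)"
    define w where "w = ?B *\<^sub>v x"
    have w: "w = zero_extend_vec (B0 *\<^sub>v vec_first x k) + x $ k \<cdot>\<^sub>v u" unfolding w_def using Bx x by simp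
    have w_carrier: "w \<in> carrier_vec (Suc m)" using w u_carrier B0 by simp
    have w_last: "w $ m = x $ k" using w u_carrier B0 u by (simp add: zero_extend_vec_def)
    have "vec_first w m = B0 *\<^sub>v vec_first x k + x $ k \<cdot>\<^sub>v vec_first u m"
      unfolding w using u_carrier B0 by (subst vec_first_add) (auto simp: vec_first_smult vec_first_zero_extend)
    then have "C0 *\<^sub>v vec_first w m = vec_first x k + x $ k \<cdot>\<^sub>v (C0 *\<^sub>v vec_first u m)"
      using B0 C0 inv by (simp add: mult_add_distrib_mat_vec[of C0 k m] mult_mat_vec[of C0 k m])
    then show "?C *\<^sub>v (?B *\<^sub>v x) = x"
      unfolding w_def[symmetric] Cw[OF w_carrier] w_last
      using x C0 by (intro eq_vecI) (auto simp: vec_first_def less_Suc_eq)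
    show "?B *\<^sub>v x \<in> W"
      unfolding w_def[symmetric] w using add smult range' u by simp
  next
    fix w assume w: "w \<in> W"
    have w_carrier: "w \<in> carrier_vec (Suc m)" using w carrier by auto
    define w' where "w' = w + (- w $ m) \<cdot>\<^sub>v u"
    have w': "w' \<in> W" "w' $ m = 0"
      unfolding w'_def using w u add smult w_carrier u_carrier by auto
    have "C0 *\<^sub>v vec_first w' m = C0 *\<^sub>v vec_first w m + (- w $ m) \<cdot>\<^sub>v (C0 *\<^sub>v vec_first u m)"
      unfolding w'_def using w_carrier u_carrier C0
      by (simp add: vec_first_add vec_first_smult mult_add_distrib_mat_vec[of C0 k m] mult_mat_vec[of C0 k m])
    then have first: "vec_first (?C *\<^sub>v w) k = C0 *\<^sub>v vec_first w' m"
      unfolding Cw[OF w_carrier] using C0 by (intro eq_vecI) (auto simp: vec_first_def)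
    have "?B *\<^sub>v (?C *\<^sub>v w) = zero_extend_vec (vec_first w' m) + w $ m \<cdot>\<^sub>v u"
      using Bx[of "?C *\<^sub>v w"] first retract[OF w'] by (simp add: Cw[OF w_carrier])
    also have "\<dots> = w" 
      using zero_extend_vec_first[OF _ w'(2)] w' carrier w_carrier u_carrier unfolding w'_def
      by (intro eq_vecI) auto
    finally show "?B *\<^sub>v (?C *\<^sub>v w) = w" .
  qed auto
qed

lemma vec_subspace_coordinate_maps:
  assumes "vec_subspace n W"
  obtains k B C where "coordinate_maps n W k B C"
  using assms
proof (induction n arbitrary: W thesis)
  case 0
  then have "W = {0\<^sub>v 0}" unfolding vec_subspace_def using carrier_vec_0_eq by blast
  then have "coordinate_maps 0 W 0 (0\<^sub>m 0 0) (0\<^sub>m 0 0)"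
    unfolding coordinate_maps_def by (auto intro: carrier_vec_0_eq)
  then show ?case by (rule 0)
next
  case (Suc m)
  obtain k B0 C0 where coords: "coordinate_maps m {vec_first w m | w. w \<in> W \<and> w $ m = 0} k B0 C0"
    using Suc.IH vec_subspace_truncate[OF Suc.prems(2)] by blast
  show ?case
  proof (cases "\<exists>u \<in> W. u $ m \<noteq> 0")
    case False
    then show ?thesis
      using coordinate_maps_zero_last[OF _ _ coords] Suc.prems unfolding vec_subspace_def by blast
  next
    case True
    then obtain u where u: "u \<in> W" "u $ m \<noteq> 0" by blast
    have "(1 / u $ m) \<cdot>\<^sub>v u \<in> W" "((1 / u $ m) \<cdot>\<^sub>v u) $ m = 1"
      using u Suc.prems(2) unfolding vec_subspace_def by auto
    then show ?thesis using coordinate_maps_extend[OF Suc.prems(2) _ _ coords] Suc.prems(1) by blast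
  qed
qed

lemma mat_range_subspace:
  assumes A: "A \<in> carrier_mat n m"
  shows "vec_subspace n {A *\<^sub>v v | v. v \<in> carrier_vec m}"
  unfolding vec_subspace_def
proof (intro conjI ballI allI)
  show "0\<^sub>v n \<in> {A *\<^sub>v v | v. v \<in> carrier_vec m}"
    using A by (intro CollectI exI[of _ "0\<^sub>v m"]) (simp add: mult_mat_vec_zero)
  fix c v assume "v \<in> {A *\<^sub>v v | v. v \<in> carrier_vec m}"
  then obtain v' where v': "v = A *\<^sub>v v'" "v' \<in> carrier_vec m" by blast
  show "c \<cdot>\<^sub>v v \<in> {A *\<^sub>v v | v. v \<in> carrier_vec m}"
    using v' A by (intro CollectI exI[of _ "c \<cdot>\<^sub>v v'"]) (simp add: mult_mat_vec)
  fix w assume "w \<in> {A *\<^sub>v v | v. v \<in> carrier_vec m}"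
  then obtain w' where w': "w = A *\<^sub>v w'" "w' \<in> carrier_vec m" by blast
  show "v + w \<in> {A *\<^sub>v v | v. v \<in> carrier_vec m}"
    using v' w' A by (intro CollectI exI[of _ "v' + w'"]) (simp add: mult_add_distrib_mat_vec)
qed (use A in auto)

lemma coordinate_maps_complement:
  assumes coords: "coordinate_maps k W j B C" and W: "W \<subseteq> carrier_vec k"
    and coords': "coordinate_maps k {(1\<^sub>m k - B * C) *\<^sub>v v | v. v \<in> carrier_vec k} j' B' C'"
  shows "C' * (1\<^sub>m k - B * C) * B' = 1\<^sub>m j'" and "B * C + B' * (C' * (1\<^sub>m k - B * C)) = 1\<^sub>m k"
    and "\<And>w. w \<in> W \<Longrightarrow> (C' * (1\<^sub>m k - B * C)) *\<^sub>v w = 0\<^sub>v j'"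
proof -
  have B: "B \<in> carrier_mat k j" and C: "C \<in> carrier_mat j k"
    and CB: "\<And>x. x \<in> carrier_vec j \<Longrightarrow> C *\<^sub>v (B *\<^sub>v x) = x" and BC: "\<And>w. w \<in> W \<Longrightarrow> B *\<^sub>v (C *\<^sub>v w) = w"
    using coords unfolding coordinate_maps_def by auto
  define Q where "Q = 1\<^sub>m k - B * C"
  have Q: "Q \<in> carrier_mat k k" unfolding Q_def using B C by auto
  have B': "B' \<in> carrier_mat k j'" and C': "C' \<in> carrier_mat j' k"
    and C'B': "\<And>x. x \<in> carrier_vec j' \<Longrightarrow> C' *\<^sub>v (B' *\<^sub>v x) = x"
    and range': "\<And>x. x \<in> carrier_vec j' \<Longrightarrow> \<exists>v \<in> carrier_vec k. B' *\<^sub>v x = Q *\<^sub>v v"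
    and B'C': "\<And>v. v \<in> carrier_vec k \<Longrightarrow> B' *\<^sub>v (C' *\<^sub>v (Q *\<^sub>v v)) = Q *\<^sub>v v"
    using coords' unfolding coordinate_maps_def Q_def by blast+
  have Qv: "Q *\<^sub>v v = v - B *\<^sub>v (C *\<^sub>v v)" if "v \<in> carrier_vec k" for v
    unfolding Q_def using that B C by (simp add: minus_mult_distrib_mat_vec[of _ k k])
  have QQ: "Q *\<^sub>v (Q *\<^sub>v v) = Q *\<^sub>v v" if v: "v \<in> carrier_vec k" for v
  proof -
    have "B *\<^sub>v (C *\<^sub>v (Q *\<^sub>v v)) = 0\<^sub>v k"
      using v B C CB by (simp add: Qv mult_minus_distrib_mat_vec[of _ j k] mult_minus_distrib_mat_vec[of _ k j])
    then show ?thesis using v Q by (simp add: Qv[of "Q *\<^sub>v v"])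
  qed
  have Dv: "(C' * Q) *\<^sub>v v = C' *\<^sub>v (Q *\<^sub>v v)" if "v \<in> carrier_vec k" for v
    using that C' Q by simp
  show "C' * (1\<^sub>m k - B * C) * B' = 1\<^sub>m j'"
    unfolding Q_def[symmetric]
  proof (rule eq_matI_mult_vec[of _ j' j'])
    fix x :: "complex vec" assume x: "x \<in> carrier_vec j'"
    then obtain v where "v \<in> carrier_vec k" "B' *\<^sub>v x = Q *\<^sub>v v" using range' by blast
    then have "C' *\<^sub>v (Q *\<^sub>v (B' *\<^sub>v x)) = x" using C'B'[OF x] QQ by simp
    then show "(C' * Q * B') *\<^sub>v x = 1\<^sub>m j' *\<^sub>v x" using x by (simp add: mult3_mat_vec[OF C' Q B' x])
  qed (use C' Q B' in auto)
  show "B * C + B' * (C' * (1\<^sub>m k - B * C)) = 1\<^sub>m k"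
    unfolding Q_def[symmetric]
  proof (rule eq_matI_mult_vec[of _ k k])
    fix v :: "complex vec" assume v: "v \<in> carrier_vec k"
    have "(B * C + B' * (C' * Q)) *\<^sub>v v = B *\<^sub>v (C *\<^sub>v v) + Q *\<^sub>v v"
      using v B C B' mult_carrier_mat[OF C' Q] B'C'[OF v] by (simp add: add_mult_distrib_mat_vec[of _ k k] Dv)
    also have "\<dots> = v" using v B C by (intro eq_vecI) (auto simp: Qv)
    finally show "(B * C + B' * (C' * Q)) *\<^sub>v v = 1\<^sub>m k *\<^sub>v v" using v by simp
  qed (use B C B' C' Q in auto)
  show "(C' * (1\<^sub>m k - B * C)) *\<^sub>v w = 0\<^sub>v j'" if "w \<in> W" for w
    unfolding Q_def[symmetric] using that W C' by (auto simp: Dv Qv BC mult_mat_vec_zero)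
qed

lemma vec_subspace_complement:
  assumes W: "vec_subspace k W" and nonzero: "W \<noteq> {0\<^sub>v k}" and proper: "W \<noteq> carrier_vec k"
  obtains j j' B C B' D where
    "B \<in> carrier_mat k j" "C \<in> carrier_mat j k" "B' \<in> carrier_mat k j'" "D \<in> carrier_mat j' k"
    "C * B = 1\<^sub>m j" "D * B' = 1\<^sub>m j'" "B * C + B' * D = 1\<^sub>m k"
    "\<And>x. x \<in> carrier_vec j \<Longrightarrow> B *\<^sub>v x \<in> W" "\<And>w. w \<in> W \<Longrightarrow> D *\<^sub>v w = 0\<^sub>v j'" "0 < j" "0 < j'"
proof -
  have W_carrier: "W \<subseteq> carrier_vec k" and zero: "0\<^sub>v k \<in> W"
    using W unfolding vec_subspace_def by auto
  obtain j B C where coords: "coordinate_maps k W j B C" using vec_subspace_coordinate_maps[OF W] .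
  then have B: "B \<in> carrier_mat k j" and C: "C \<in> carrier_mat j k"
    and CB: "\<And>x. x \<in> carrier_vec j \<Longrightarrow> C *\<^sub>v (B *\<^sub>v x) = x" and range: "\<And>x. x \<in> carrier_vec j \<Longrightarrow> B *\<^sub>v x \<in> W"
    and BC: "\<And>w. w \<in> W \<Longrightarrow> B *\<^sub>v (C *\<^sub>v w) = w"
    unfolding coordinate_maps_def by auto
  have "1\<^sub>m k - B * C \<in> carrier_mat k k" using B C by auto
  then obtain j' B' C' where coords': "coordinate_maps k {(1\<^sub>m k - B * C) *\<^sub>v v | v. v \<in> carrier_vec k} j' B' C'"
    using vec_subspace_coordinate_maps[OF mat_range_subspace] by blast
  define D where "D = C' * (1\<^sub>m k - B * C)"
  have B': "B' \<in> carrier_mat k j'" and D: "D \<in> carrier_mat j' k"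
    using coords' B C unfolding coordinate_maps_def D_def by auto
  note complement = coordinate_maps_complement[OF coords W_carrier coords', folded D_def]
  show thesis
  proof
    show "C * B = 1\<^sub>m j" using B C CB by (intro eq_matI_mult_vec[of _ j j]) auto
    show "0 < j"
    proof (rule ccontr)
      assume "\<not> 0 < j"
      then have "C *\<^sub>v w = 0\<^sub>v 0" for w using C by (intro carrier_vec_0_eq carrier_vecI) simp
      then have "w = 0\<^sub>v k" if "w \<in> W" for w
        using BC[OF that] mult_mat_vec_zero[OF B] \<open>\<not> 0 < j\<close> by simp
      then show False using nonzero zero by blast
    qed
    show "0 < j'"
    proof (rule ccontr)
      assume "\<not> 0 < j'"
      then have "D *\<^sub>v v = 0\<^sub>v j'" for v using D by (auto intro!: carrier_vec_0_eq carrier_vecI)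
      then have "(B * C + B' * D) *\<^sub>v v = B *\<^sub>v (C *\<^sub>v v)" if "v \<in> carrier_vec k" for v
        using that B C B' D by (simp add: add_mult_distrib_mat_vec[of _ k k] mult_mat_vec_zero)
      then have "v = B *\<^sub>v (C *\<^sub>v v)" if "v \<in> carrier_vec k" for v
        using that complement(2) by simp
      then have "v \<in> W" if "v \<in> carrier_vec k" for v
        using that range[of "C *\<^sub>v v"] C by simp
      then show False using proper W_carrier by auto
    qed
  qed (use B C B' D complement range in auto)
qed

section \<open>Representations\<close>

lemma invariant_subspace_iff:
  "invariant_subspace G n \<rho> W \<longleftrightarrow> vec_subspace n W \<and> (\<forall>g \<in> carrier G. \<forall>v \<in> W. \<rho> g *\<^sub>v v \<in> W)"
  unfolding invariant_subspace_def vec_subspace_def by blast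

lemma is_rep_carrier: "is_rep G n R \<Longrightarrow> g \<in> carrier G \<Longrightarrow> R g \<in> carrier_mat n n"
  unfolding is_rep_def by blast

lemma is_rep_mult:
  "is_rep G n R \<Longrightarrow> g \<in> carrier G \<Longrightarrow> h \<in> carrier G \<Longrightarrow> R (g \<otimes>\<^bsub>G\<^esub> h) = R g * R h"
  unfolding is_rep_def by blast

lemma is_rep_one: "is_rep G n R \<Longrightarrow> R \<one>\<^bsub>G\<^esub> = 1\<^sub>m n"
  unfolding is_rep_def by blast

lemma is_rep_compression:
  assumes rep: "is_rep G k R" and B: "B \<in> carrier_mat k j" and C: "C \<in> carrier_mat j k"
    and CB: "C * B = 1\<^sub>m j"
    and absorb: "\<And>g h x. g \<in> carrier G \<Longrightarrow> h \<in> carrier G \<Longrightarrow> x \<in> carrier_vec j \<Longrightarrow>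
       C *\<^sub>v (R g *\<^sub>v (B *\<^sub>v (C *\<^sub>v (R h *\<^sub>v (B *\<^sub>v x))))) = C *\<^sub>v (R g *\<^sub>v (R h *\<^sub>v (B *\<^sub>v x)))"
  shows "is_rep G j (\<lambda>g. C * R g * B)"
  unfolding is_rep_def
proof (intro conjI ballI)
  note R = is_rep_carrier[OF rep]
  have compressed: "C * R g * B \<in> carrier_mat j j" if "g \<in> carrier G" for g
    using R[OF that] B C by simp
  have act: "(C * R g * B) *\<^sub>v x = C *\<^sub>v (R g *\<^sub>v (B *\<^sub>v x))" if "g \<in> carrier G" "x \<in> carrier_vec j" for g x
    using mult3_mat_vec[OF C R[OF that(1)] B that(2)] .
  show "C * R g * B \<in> carrier_mat j j" if "g \<in> carrier G" for g using compressed[OF that] .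
  show "C * R (g \<otimes>\<^bsub>G\<^esub> h) * B = C * R g * B * (C * R h * B)" if g: "g \<in> carrier G" and h: "h \<in> carrier G" for g h
  proof (rule eq_matI_mult_vec[of _ j j])
    fix x :: "complex vec" assume x: "x \<in> carrier_vec j"
    have "(C * R (g \<otimes>\<^bsub>G\<^esub> h) * B) *\<^sub>v x = C *\<^sub>v (R g *\<^sub>v (R h *\<^sub>v (B *\<^sub>v x)))"
      using mult3_mat_vec[OF C mult_carrier_mat[OF R[OF g] R[OF h]] B x] R[OF g] R[OF h] B x
      by (simp add: is_rep_mult[OF rep g h])
    also have "\<dots> = (C * R g * B) *\<^sub>v ((C * R h * B) *\<^sub>v x)"
      using absorb[OF g h x] act[OF h x] act[OF g] C R[OF h] B x by simp
    also have "\<dots> = (C * R g * B * (C * R h * B)) *\<^sub>v x"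
      using compressed[OF g] compressed[OF h] x by (simp only: assoc_mult_mat_vec)
    finally show "(C * R (g \<otimes>\<^bsub>G\<^esub> h) * B) *\<^sub>v x = (C * R g * B * (C * R h * B)) *\<^sub>v x" .
  qed (use compressed[OF g] compressed[OF h] C B R[OF g] R[OF h] in \<open>auto simp: is_rep_mult[OF rep g h]\<close>)
  show "C * R \<one>\<^bsub>G\<^esub> * B = 1\<^sub>m j" using C CB by (simp add: is_rep_one[OF rep])
qed

text \<open>The diagonal blocks of \<open>R\<close> with respect to the resolution \<open>B C + B' D = 1\<close>: the
  subrepresentation on the range of \<open>B\<close> and the corresponding quotient representation.\<close>

lemma rep_block_triangular:
  assumes rep: "is_rep G k R"
    and B: "B \<in> carrier_mat k j" and C: "C \<in> carrier_mat j k"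
    and B': "B' \<in> carrier_mat k j'" and D: "D \<in> carrier_mat j' k"
    and CB: "C * B = 1\<^sub>m j" and DB': "D * B' = 1\<^sub>m j'" and resolution: "B * C + B' * D = 1\<^sub>m k"
    and triangular: "\<And>g x. g \<in> carrier G \<Longrightarrow> x \<in> carrier_vec j \<Longrightarrow> D *\<^sub>v (R g *\<^sub>v (B *\<^sub>v x)) = 0\<^sub>v j'"
  shows "is_rep G j (\<lambda>g. C * R g * B)" and "is_rep G j' (\<lambda>g. D * R g * B')" and "j + j' = k"
    and "\<And>g. g \<in> carrier G \<Longrightarrow> mat_trace (R g) = mat_trace (C * R g * B) + mat_trace (D * R g * B')"
proof -
  note R = is_rep_carrier[OF rep]
  have split: "B *\<^sub>v (C *\<^sub>v v) + B' *\<^sub>v (D *\<^sub>v v) = v" if v: "v \<in> carrier_vec k" for v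
  proof -
    have "B *\<^sub>v (C *\<^sub>v v) + B' *\<^sub>v (D *\<^sub>v v) = (B * C + B' * D) *\<^sub>v v"
      using v B C B' D by (simp add: add_mult_distrib_mat_vec[of _ k k])
    then show ?thesis using v by (simp add: resolution)
  qed
  have rep1: "is_rep G j (\<lambda>g. C * R g * B)"
  proof (rule is_rep_compression[OF rep B C CB])
    fix g h and x :: "complex vec"
    assume g: "g \<in> carrier G" and h: "h \<in> carrier G" and x: "x \<in> carrier_vec j"
    let ?y = "R h *\<^sub>v (B *\<^sub>v x)"
    have "B *\<^sub>v (C *\<^sub>v ?y) = ?y"
      using split[of ?y] triangular[OF h x] R[OF h] B B' C x by (simp add: mult_mat_vec_zero)
    then show "C *\<^sub>v (R g *\<^sub>v (B *\<^sub>v (C *\<^sub>v ?y))) = C *\<^sub>v (R g *\<^sub>v ?y)" by simp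
  qed
  have rep2: "is_rep G j' (\<lambda>g. D * R g * B')"
  proof (rule is_rep_compression[OF rep B' D DB'])
    fix g h and x :: "complex vec"
    assume g: "g \<in> carrier G" and h: "h \<in> carrier G" and x: "x \<in> carrier_vec j'"
    let ?y = "R h *\<^sub>v (B' *\<^sub>v x)"
    have y: "?y \<in> carrier_vec k" using R[OF h] B' x by simp
    have "D *\<^sub>v (R g *\<^sub>v ?y) = D *\<^sub>v (R g *\<^sub>v (B *\<^sub>v (C *\<^sub>v ?y) + B' *\<^sub>v (D *\<^sub>v ?y)))"
      using split[OF y] by simp
    also have "\<dots> = D *\<^sub>v (R g *\<^sub>v (B *\<^sub>v (C *\<^sub>v ?y))) + D *\<^sub>v (R g *\<^sub>v (B' *\<^sub>v (D *\<^sub>v ?y)))"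
      using y R[OF g] B C B' D
      by (simp add: mult_add_distrib_mat_vec[of "R g" k k] mult_add_distrib_mat_vec[of D j' k])
    also have "\<dots> = D *\<^sub>v (R g *\<^sub>v (B' *\<^sub>v (D *\<^sub>v ?y)))"
      using triangular[OF g, of "C *\<^sub>v ?y"] y R[OF g] B' C D by simp
    finally show "D *\<^sub>v (R g *\<^sub>v (B' *\<^sub>v (D *\<^sub>v ?y))) = D *\<^sub>v (R g *\<^sub>v ?y)" by simp
  qed
  have trace: "mat_trace (R g) = mat_trace (C * R g * B) + mat_trace (D * R g * B')" if "g \<in> carrier G" for g
    using mat_trace_resolution[OF B C B' D R[OF that] resolution] .
  have "of_nat k = mat_trace (C * 1\<^sub>m k * B) + mat_trace (D * 1\<^sub>m k * B')"
    using mat_trace_resolution[OF B C B' D one_carrier_mat resolution] by (simp add: mat_trace_one)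
  also have "\<dots> = of_nat j + of_nat j'" using B C B' D by (simp add: CB DB' mat_trace_one)
  finally have "j + j' = k" by (metis of_nat_add of_nat_eq_iff)
  with rep1 rep2 trace show "is_rep G j (\<lambda>g. C * R g * B)" "is_rep G j' (\<lambda>g. D * R g * B')" "j + j' = k"
    "\<And>g. g \<in> carrier G \<Longrightarrow> mat_trace (R g) = mat_trace (C * R g * B) + mat_trace (D * R g * B')"
    by auto
qed


lemma reducible_rep_split:
  assumes rep: "is_rep G k R" and inv: "invariant_subspace G k R W"
    and nonzero: "W \<noteq> {0\<^sub>v k}" and proper: "W \<noteq> carrier_vec k"
  obtains j j' R1 R2 where "is_rep G j R1" "is_rep G j' R2" "0 < j" "0 < j'" "j + j' = k"
    "\<And>g. g \<in> carrier G \<Longrightarrow> mat_trace (R g) = mat_trace (R1 g) + mat_trace (R2 g)"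
proof -
  have W: "vec_subspace k W" and stable: "\<And>g v. g \<in> carrier G \<Longrightarrow> v \<in> W \<Longrightarrow> R g *\<^sub>v v \<in> W"
    using inv by (auto simp: invariant_subspace_iff)
  obtain B j C B' j' D where B: "B \<in> carrier_mat k j" and C: "C \<in> carrier_mat j k"
    and B': "B' \<in> carrier_mat k j'" and D: "D \<in> carrier_mat j' k"
    and CB: "C * B = 1\<^sub>m j" and DB': "D * B' = 1\<^sub>m j'" and resolution: "B * C + B' * D = 1\<^sub>m k"
    and range: "\<And>x. x \<in> carrier_vec j \<Longrightarrow> B *\<^sub>v x \<in> W" and kill: "\<And>w. w \<in> W \<Longrightarrow> D *\<^sub>v w = 0\<^sub>v j'"
    and "0 < j" "0 < j'"
    by (rule vec_subspace_complement[OF W nonzero proper]) blast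
  have "D *\<^sub>v (R g *\<^sub>v (B *\<^sub>v x)) = 0\<^sub>v j'" if "g \<in> carrier G" "x \<in> carrier_vec j" for g x
    using that kill stable range by blast
  note block = rep_block_triangular[OF rep B C B' D CB DB' resolution this]
  show thesis by (rule that[OF block(1,2) \<open>0 < j\<close> \<open>0 < j'\<close> block(3,4)])
qed

text \<open>No complete reducibility is needed: characters are additive along invariant subspaces.\<close>

lemma char_relation_from_irreducibles:
  fixes c :: "'a \<Rightarrow> complex"
  assumes irr: "\<And>n R. irreducible_rep G n R \<Longrightarrow> (\<Sum>g \<in> carrier G. c g * mat_trace (R g)) = 0"
    and rep: "is_rep G k R"
  shows "(\<Sum>g \<in> carrier G. c g * mat_trace (R g)) = 0"
  using rep
proof (induction k arbitrary: R rule: less_induct)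
  case (less k R)
  show ?case
  proof (cases "irreducible_rep G k R \<or> k = 0")
    case True
    moreover have "mat_trace (R g) = 0" if "k = 0" "g \<in> carrier G" for g
      using that is_rep_carrier[OF less.prems, of g] by (simp add: mat_trace_def)
    ultimately show ?thesis using irr by auto
  next
    case False
    then obtain W where "invariant_subspace G k R W" "W \<noteq> {0\<^sub>v k}" "W \<noteq> carrier_vec k"
      using less.prems unfolding irreducible_rep_def by auto
    then obtain j j' R1 R2 where "is_rep G j R1" "is_rep G j' R2" "0 < j" "0 < j'" "j + j' = k"
      and "\<And>g. g \<in> carrier G \<Longrightarrow> mat_trace (R g) = mat_trace (R1 g) + mat_trace (R2 g)"
      using reducible_rep_split[OF less.prems] by metis
    then show ?thesis using less.IH[of j R1] less.IH[of j' R2] by (simp add: distrib_left sum.distrib)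
  qed
qed

lemma schur_lemma:
  assumes irr: "irreducible_rep G n R" and T: "T \<in> carrier_mat n n"
    and comm: "\<And>g. g \<in> carrier G \<Longrightarrow> T * R g = R g * T"
  obtains a where "T = a \<cdot>\<^sub>m 1\<^sub>m n"
proof -
  have rep: "is_rep G n R" and "n > 0"
    and simple: "\<And>W. invariant_subspace G n R W \<Longrightarrow> W = {0\<^sub>v n} \<or> W = carrier_vec n"
    using irr unfolding irreducible_rep_def by auto
  note R = is_rep_carrier[OF rep]
  obtain a where "eigenvalue T a" using spectrum_non_empty[OF T \<open>n > 0\<close>] unfolding spectrum_def by auto
  then obtain v where v: "v \<in> carrier_vec n" "v \<noteq> 0\<^sub>v n" "T *\<^sub>v v = a \<cdot>\<^sub>v v"
    unfolding eigenvalue_def eigenvector_def using T by auto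
  define E where "E = {w \<in> carrier_vec n. T *\<^sub>v w = a \<cdot>\<^sub>v w}"
  have "invariant_subspace G n R E"
    unfolding invariant_subspace_def
  proof (intro conjI ballI allI)
    show "E \<subseteq> carrier_vec n" unfolding E_def by auto
    show "0\<^sub>v n \<in> E" unfolding E_def using T by (auto simp: mult_mat_vec_zero)
    fix w assume "w \<in> E"
    then have w: "w \<in> carrier_vec n" and Tw: "T *\<^sub>v w = a \<cdot>\<^sub>v w" unfolding E_def by auto
    show "w' \<in> E \<Longrightarrow> w + w' \<in> E" for w'
      unfolding E_def using w Tw T by (auto simp: mult_add_distrib_mat_vec[of _ n n] smult_add_distrib_vec)
    show "c \<cdot>\<^sub>v w \<in> E" for c
      unfolding E_def using w Tw T by (simp add: mult_mat_vec[of _ n n] smult_smult_assoc mult.commute)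
    fix g assume g: "g \<in> carrier G"
    have "T *\<^sub>v (R g *\<^sub>v w) = R g *\<^sub>v (T *\<^sub>v w)"
      using T R[OF g] w comm[OF g] by (metis assoc_mult_mat_vec)
    then show "R g *\<^sub>v w \<in> E" unfolding E_def using R[OF g] w Tw by (simp add: mult_mat_vec[of _ n n])
  qed
  then have "E = carrier_vec n"
    using simple v unfolding E_def by blast
  then have "T = a \<cdot>\<^sub>m 1\<^sub>m n"
    using T by (intro eq_matI_mult_vec[of _ n n]) (auto simp: E_def smult_one_mat_mult_vec)
  then show thesis by (rule that)
qed

section \<open>Class sums and the separation of conjugacy classes\<close>

definition conj_closed :: "('a, 'b) monoid_scheme \<Rightarrow> 'a set \<Rightarrow> bool" where
  "conj_closed G S \<longleftrightarrow> S \<subseteq> carrier G \<and> (\<forall>x \<in> carrier G. \<forall>y \<in> S. inv\<^bsub>G\<^esub> x \<otimes>\<^bsub>G\<^esub> y \<otimes>\<^bsub>G\<^esub> x \<in> S)"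

definition conj_class :: "('a, 'b) monoid_scheme \<Rightarrow> 'a \<Rightarrow> 'a set" where
  "conj_class G a = {inv\<^bsub>G\<^esub> x \<otimes>\<^bsub>G\<^esub> a \<otimes>\<^bsub>G\<^esub> x | x. x \<in> carrier G}"

context group
begin

lemma mult_inv_cancel_left [simp]: "x \<in> carrier G \<Longrightarrow> a \<in> carrier G \<Longrightarrow> x \<otimes> (inv x \<otimes> a) = a"
  by (simp add: m_assoc[symmetric])

lemma inv_mult_cancel_left [simp]: "x \<in> carrier G \<Longrightarrow> a \<in> carrier G \<Longrightarrow> inv x \<otimes> (x \<otimes> a) = a"
  by (simp add: m_assoc[symmetric])


lemma conj_class_closed:
  assumes a: "a \<in> carrier G"
  shows "conj_closed G (conj_class G a)"
  unfolding conj_closed_def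
proof (intro conjI ballI)
  show "conj_class G a \<subseteq> carrier G" using a unfolding conj_class_def by auto
  fix x y assume x: "x \<in> carrier G" and "y \<in> conj_class G a"
  then obtain z where z: "z \<in> carrier G" and y: "y = inv z \<otimes> a \<otimes> z" unfolding conj_class_def by auto
  have "inv x \<otimes> y \<otimes> x = inv (z \<otimes> x) \<otimes> a \<otimes> (z \<otimes> x)"
    using a x z y by (simp add: inv_mult_group m_assoc)
  then show "inv x \<otimes> y \<otimes> x \<in> conj_class G a" using x z unfolding conj_class_def by blast
qed

lemma conj_class_self: "a \<in> carrier G \<Longrightarrow> a \<in> conj_class G a"
  unfolding conj_class_def by (auto intro!: exI[of _ \<one>])

lemma conj_class_disjoint:
  assumes a: "a \<in> carrier G" and b: "b \<in> carrier G" and "b \<notin> conj_class G a"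
  shows "conj_class G a \<inter> conj_class G b = {}"
proof (rule ccontr)
  assume "conj_class G a \<inter> conj_class G b \<noteq> {}"
  then obtain x z where x: "x \<in> carrier G" and z: "z \<in> carrier G" and eq: "inv x \<otimes> a \<otimes> x = inv z \<otimes> b \<otimes> z"
    unfolding conj_class_def by blast
  have "b = z \<otimes> (inv z \<otimes> b \<otimes> z) \<otimes> inv z" using conjugation_is_surj[OF z b] by simp
  also have "\<dots> = inv (x \<otimes> inv z) \<otimes> a \<otimes> (x \<otimes> inv z)"
    unfolding eq[symmetric] using a x z by (simp add: inv_mult_group m_assoc)
  finally show False using \<open>b \<notin> conj_class G a\<close> x z unfolding conj_class_def by blast
qed

lemma normal_conj_closed:
  assumes "M \<lhd> G"
  shows "conj_closed G M"
proof -
  interpret normal M G by fact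
  show ?thesis unfolding conj_closed_def using subset inv_op_closed1 by blast
qed

lemma conj_closed_conj_bij:
  assumes S: "conj_closed G S" and g: "g \<in> carrier G"
  shows "bij_betw (\<lambda>y. g \<otimes> y \<otimes> inv g) S S"
proof (rule bij_betw_imageI)
  have sub: "S \<subseteq> carrier G" and closed: "\<And>x y. x \<in> carrier G \<Longrightarrow> y \<in> S \<Longrightarrow> inv x \<otimes> y \<otimes> x \<in> S"
    using S unfolding conj_closed_def by auto
  show "inj_on (\<lambda>y. g \<otimes> y \<otimes> inv g) S"
    using sub g conjugation_is_inj by (intro inj_onI) blast
  have "g \<otimes> y \<otimes> inv g \<in> S" if "y \<in> S" for y
    using closed[OF inv_closed[OF g] that] g by simp
  moreover have "y \<in> (\<lambda>y. g \<otimes> y \<otimes> inv g) ` S" if y: "y \<in> S" for y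
  proof
    show "y = g \<otimes> (inv g \<otimes> y \<otimes> g) \<otimes> inv g" using y sub g conjugation_is_surj by auto
  qed (use closed[OF g y] in simp)
  ultimately show "(\<lambda>y. g \<otimes> y \<otimes> inv g) ` S = S" by blast
qed

lemma mat_sum_conj_closed_commute:
  assumes rep: "is_rep G n R" and S: "conj_closed G S" and g: "g \<in> carrier G"
  shows "mat_sum n S R * R g = R g * mat_sum n S R"
proof -
  have sub: "S \<subseteq> carrier G" using S unfolding conj_closed_def by auto
  note R = is_rep_carrier[OF rep] and R_mult = is_rep_mult[OF rep]
  have RS: "\<And>y. y \<in> S \<Longrightarrow> R y \<in> carrier_mat n n" using sub R by auto
  have "mat_sum n S R * R g = mat_sum n S (\<lambda>y. R (y \<otimes> g))"
    using sub g by (simp add: mult_mat_sum_right[OF R[OF g] RS] R_mult subsetD cong: mat_sum_cong)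
  also have "\<dots> = mat_sum n S (\<lambda>y. R ((g \<otimes> y \<otimes> inv g) \<otimes> g))"
    by (rule mat_sum_reindex[OF conj_closed_conj_bij[OF S g], symmetric])
  also have "\<dots> = mat_sum n S (\<lambda>y. R g * R y)"
  proof (rule mat_sum_cong)
    fix y assume "y \<in> S"
    with sub g have y: "y \<in> carrier G" and "g \<otimes> y \<otimes> inv g \<otimes> g = g \<otimes> y" by (auto simp: m_assoc)
    then show "R (g \<otimes> y \<otimes> inv g \<otimes> g) = R g * R y" using g by (simp add: R_mult)
  qed
  also have "\<dots> = R g * mat_sum n S R"
    by (rule mult_mat_sum_left[OF R[OF g] RS, symmetric])
  finally show ?thesis .
qed

lemma conj_closed_mat_sum_scalar:
  assumes irr: "irreducible_rep G n R" and S: "conj_closed G S"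
  obtains a where "mat_sum n S R = a \<cdot>\<^sub>m 1\<^sub>m n"
proof -
  have rep: "is_rep G n R" using irr unfolding irreducible_rep_def by blast
  show thesis using schur_lemma[OF irr mat_sum_carrier mat_sum_conj_closed_commute[OF rep S]] that by blast
qed

lemma mat_trace_rep_conj:
  assumes rep: "is_rep G n R" and a: "a \<in> carrier G" and x: "x \<in> carrier G"
  shows "mat_trace (R (inv x \<otimes> a \<otimes> x)) = mat_trace (R a)"
proof -
  note R = is_rep_carrier[OF rep] and R_mult = is_rep_mult[OF rep]
  have inv: "R x * R (inv x) = 1\<^sub>m n" using x R_mult[of x "inv x"] by (simp add: is_rep_one[OF rep])
  have "mat_trace (R (inv x \<otimes> a \<otimes> x)) = mat_trace (R (inv x) * (R a * R x))"
    using a x R by (simp add: R_mult assoc_mult_mat[of _ n n _ n _ n])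
  also have "\<dots> = mat_trace (R a * R x * R (inv x))"
    using a x R by (subst mat_trace_mult_comm[of _ n n]) (auto intro: mult_carrier_mat)
  also have "\<dots> = mat_trace (R a)"
    using a x R inv by (simp add: assoc_mult_mat[of _ n n _ n _ n] right_mult_one_mat[OF R[OF a]])
  finally show ?thesis .
qed

lemma class_sum_mat_trace:
  assumes irr: "irreducible_rep G n R" and a: "a \<in> carrier G" and k: "k \<in> carrier G"
  shows "of_nat n * (\<Sum>g \<in> conj_class G a. mat_trace (R g * R k))
       = of_nat (card (conj_class G a)) * mat_trace (R a) * mat_trace (R k)"
proof -
  have rep: "is_rep G n R" using irr unfolding irreducible_rep_def by blast
  note R = is_rep_carrier[OF rep]
  have sub: "conj_class G a \<subseteq> carrier G" using conj_class_closed[OF a] unfolding conj_closed_def by blast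
  have RA: "\<And>g. g \<in> conj_class G a \<Longrightarrow> R g \<in> carrier_mat n n" using sub R by auto
  obtain l where l: "mat_sum n (conj_class G a) R = l \<cdot>\<^sub>m 1\<^sub>m n"
    by (rule conj_closed_mat_sum_scalar[OF irr conj_class_closed[OF a]])
  have "l * of_nat n = mat_trace (mat_sum n (conj_class G a) R)"
    by (simp add: l mat_trace_smult[of _ n] mat_trace_one)
  also have "\<dots> = (\<Sum>g \<in> conj_class G a. mat_trace (R g))"
    by (rule mat_trace_mat_sum[OF RA])
  also have "\<dots> = (\<Sum>g \<in> conj_class G a. mat_trace (R a))"
    by (rule sum.cong) (auto simp: conj_class_def mat_trace_rep_conj[OF rep a])
  finally have l_n: "l * of_nat n = of_nat (card (conj_class G a)) * mat_trace (R a)" by simp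
  have "(\<Sum>g \<in> conj_class G a. mat_trace (R g * R k)) = mat_trace (mat_sum n (conj_class G a) (\<lambda>g. R g * R k))"
    using RA R[OF k] by (intro mat_trace_mat_sum[symmetric] mult_carrier_mat)
  also have "\<dots> = mat_trace (mat_sum n (conj_class G a) R * R k)"
    by (simp add: mult_mat_sum_right[OF R[OF k] RA])
  also have "\<dots> = l * mat_trace (R k)"
    using R[OF k] by (simp add: l mult_smult_assoc_mat[of _ n n] mat_trace_smult[of _ n])
  finally show ?thesis using l_n by (simp add: algebra_simps)
qed

end

definition regular_rep :: "('a, 'b) monoid_scheme \<Rightarrow> (nat \<Rightarrow> 'a) \<Rightarrow> 'a \<Rightarrow> complex mat" where
  "regular_rep G e g = mat (card (carrier G)) (card (carrier G)) (\<lambda>(i, j). if e i = g \<otimes>\<^bsub>G\<^esub> e j then 1 else 0)"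

context group
begin

lemma is_rep_regular_rep:
  assumes e: "bij_betw e {0..<card (carrier G)} (carrier G)"
  shows "is_rep G (card (carrier G)) (regular_rep G e)"
  unfolding is_rep_def
proof (intro conjI ballI)
  have e_carrier: "\<And>i. i < card (carrier G) \<Longrightarrow> e i \<in> carrier G" using e by (auto dest: bij_betwE)
  have fin: "finite (carrier G)" using bij_betw_finite[OF e] by simp
  show "regular_rep G e g \<in> carrier_mat (card (carrier G)) (card (carrier G))" for g
    by (simp add: regular_rep_def)
  show "regular_rep G e (g \<otimes> h) = regular_rep G e g * regular_rep G e h"
    if g: "g \<in> carrier G" and h: "h \<in> carrier G" for g h
  proof (rule eq_matI)
    fix i j assume "i < dim_row (regular_rep G e g * regular_rep G e h)"
      and "j < dim_col (regular_rep G e g * regular_rep G e h)"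
    then have i: "i < card (carrier G)" and j: "j < card (carrier G)" by (auto simp: regular_rep_def)
    have "(regular_rep G e g * regular_rep G e h) $$ (i, j)
        = (\<Sum>l \<in> {0..<card (carrier G)}. (if e i = g \<otimes> e l then 1 else 0) * (if e l = h \<otimes> e j then 1 else 0))"
      using i j by (simp add: regular_rep_def scalar_prod_def)
    also have "\<dots> = (\<Sum>y \<in> carrier G. (if e i = g \<otimes> y then 1 else 0) * (if y = h \<otimes> e j then 1 else 0))"
      by (rule sum.reindex_bij_betw[OF e])
    also have "\<dots> = (\<Sum>y \<in> carrier G. if y = h \<otimes> e j then (if e i = g \<otimes> y then 1 else 0) else 0)"
      by (intro sum.cong) auto
    also have "\<dots> = (if e i = g \<otimes> (h \<otimes> e j) then 1 else 0)"
      using h e_carrier[OF j] fin by (simp add: sum.delta)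
    also have "\<dots> = regular_rep G e (g \<otimes> h) $$ (i, j)"
      using i j g h e_carrier[OF j] by (simp add: regular_rep_def m_assoc)
    finally show "regular_rep G e (g \<otimes> h) $$ (i, j) = (regular_rep G e g * regular_rep G e h) $$ (i, j)" ..
  qed (auto simp: regular_rep_def)
  show "regular_rep G e \<one> = 1\<^sub>m (card (carrier G))"
    using e e_carrier unfolding regular_rep_def bij_betw_def inj_on_def by (intro eq_matI) auto
qed

lemma mat_trace_regular_rep:
  assumes e: "bij_betw e {0..<card (carrier G)} (carrier G)" and g: "g \<in> carrier G"
  shows "mat_trace (regular_rep G e g) = (if g = \<one> then of_nat (card (carrier G)) else 0)"
proof -
  have "mat_trace (regular_rep G e g) = (\<Sum>l \<in> {0..<card (carrier G)}. if e l = g \<otimes> e l then 1 else 0)"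
    by (simp add: regular_rep_def mat_trace_def atLeast0LessThan)
  also have "\<dots> = (\<Sum>y \<in> carrier G. if y = g \<otimes> y then 1 else 0)"
    by (rule sum.reindex_bij_betw[OF e])
  also have "\<dots> = (\<Sum>y \<in> carrier G. if g = \<one> then 1 else 0)"
    using g by (intro sum.cong) (auto simp: r_cancel_one')
  finally show ?thesis by simp
qed

lemma char_relation_at_one:
  assumes fin: "finite (carrier G)"
    and irr: "\<And>n R. irreducible_rep G n R \<Longrightarrow> (\<Sum>g \<in> carrier G. c g * mat_trace (R g)) = 0"
  shows "c \<one> = 0"
proof -
  obtain e where e: "bij_betw e {0..<card (carrier G)} (carrier G)"
    using ex_bij_betw_nat_finite[OF fin] by blast
  have "0 = (\<Sum>g \<in> carrier G. c g * mat_trace (regular_rep G e g))"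
    using char_relation_from_irreducibles[OF irr is_rep_regular_rep[OF e]] by simp
  also have "\<dots> = (\<Sum>g \<in> carrier G. if g = \<one> then c g * of_nat (card (carrier G)) else 0)"
    by (intro sum.cong) (auto simp: mat_trace_regular_rep[OF e])
  also have "\<dots> = c \<one> * of_nat (card (carrier G))" using fin by simp
  moreover have "card (carrier G) > 0" using fin by (auto simp: card_gt_0_iff)
  ultimately show ?thesis by simp
qed

text \<open>The coefficients \<open>c\<close> are chosen so that Schur's lemma on class sums makes the relation hold
  for every irreducible representation; the regular representation then forces \<open>c \<one> = 0\<close>.\<close>

theorem irreducible_chars_separate_classes:
  assumes fin: "finite (carrier G)" and a: "a \<in> carrier G" and b: "b \<in> carrier G"
    and same: "\<And>n R. irreducible_rep G n R \<Longrightarrow> mat_trace (R a) = mat_trace (R b)"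
  shows "b \<in> conj_class G a"
proof (rule ccontr)
  assume b_notin: "b \<notin> conj_class G a"
  define A where "A = conj_class G a"
  define B where "B = conj_class G b"
  have A_sub: "A \<subseteq> carrier G" and B_sub: "B \<subseteq> carrier G"
    using conj_class_closed[OF a] conj_class_closed[OF b] unfolding A_def B_def conj_closed_def by auto
  have disjoint: "A \<inter> B = {}" unfolding A_def B_def by (rule conj_class_disjoint[OF a b b_notin])
  define c where "c u = of_nat (card B) * (if u \<otimes> a \<in> A then 1 else 0)
                      - of_nat (card A) * (if u \<otimes> a \<in> B then 1 else (0 :: complex))" for u
  have "(\<Sum>u \<in> carrier G. c u * mat_trace (R u)) = 0" if irr: "irreducible_rep G n R" for n R
  proof -
    have rep: "is_rep G n R" and "n > 0" using irr unfolding irreducible_rep_def by auto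
    define t where "t g = mat_trace (R g * R (inv a))" for g
    have "(\<Sum>u \<in> carrier G. c u * mat_trace (R u)) = (\<Sum>g \<in> carrier G. c (g \<otimes> inv a) * mat_trace (R (g \<otimes> inv a)))"
      using a by (intro sum.reindex_bij_witness[where i = "\<lambda>g. g \<otimes> inv a" and j = "\<lambda>u. u \<otimes> a"]) (auto simp: m_assoc)
    also have "\<dots> = (\<Sum>g \<in> carrier G. of_nat (card B) * (if g \<in> A then t g else 0) - of_nat (card A) * (if g \<in> B then t g else 0))"
      using a by (intro sum.cong) (auto simp: c_def t_def m_assoc is_rep_mult[OF rep] left_diff_distrib)
    also have "\<dots> = of_nat (card B) * (\<Sum>g \<in> A. t g) - of_nat (card A) * (\<Sum>g \<in> B. t g)"
      using fin A_sub B_sub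
      by (simp add: sum_subtractf sum_distrib_left[symmetric] sum.If_cases Int_absorb1 Int_absorb2)
    finally have sum: "(\<Sum>u \<in> carrier G. c u * mat_trace (R u)) = \<dots>" .
    have "of_nat n * (of_nat (card B) * (\<Sum>g \<in> A. t g) - of_nat (card A) * (\<Sum>g \<in> B. t g))
        = of_nat (card B) * (of_nat n * (\<Sum>g \<in> A. t g)) - of_nat (card A) * (of_nat n * (\<Sum>g \<in> B. t g))"
      by (simp add: algebra_simps)
    also have "\<dots> = 0"
      using class_sum_mat_trace[OF irr a inv_closed[OF a]] class_sum_mat_trace[OF irr b inv_closed[OF a]] same[OF irr]
      unfolding A_def B_def t_def by simp
    finally show ?thesis using sum \<open>n > 0\<close> by simp
  qed
  then have "c \<one> = 0" by (rule char_relation_at_one[OF fin])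
  moreover have "a \<in> A" "a \<notin> B" using conj_class_self[OF a] disjoint unfolding A_def by auto
  moreover have "card B > 0"
    using conj_class_self[OF b] B_sub fin unfolding B_def by (auto simp: card_gt_0_iff intro: finite_subset)
  ultimately show False using a by (simp add: c_def)
qed

end

section \<open>Irreducible characters relative to a normal subgroup\<close>

context group
begin

lemma normal_mat_sum_dichotomy:
  assumes irr: "irreducible_rep G n R" and M: "M \<lhd> G"
  shows "(\<forall>z \<in> M. R z = 1\<^sub>m n) \<or> mat_sum n M R = 0\<^sub>m n n"
proof -
  interpret normal M G by fact
  have rep: "is_rep G n R" using irr unfolding irreducible_rep_def by blast
  note R = is_rep_carrier[OF rep] and R_mult = is_rep_mult[OF rep]
  have RM: "\<And>z. z \<in> M \<Longrightarrow> R z \<in> carrier_mat n n" using subset R by auto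
  obtain l where l: "mat_sum n M R = l \<cdot>\<^sub>m 1\<^sub>m n"
    by (rule conj_closed_mat_sum_scalar[OF irr normal_conj_closed[OF M]])
  have "R z = 1\<^sub>m n" if "l \<noteq> 0" and z: "z \<in> M" for z
  proof -
    have "R z * mat_sum n M R = mat_sum n M (\<lambda>y. R (z \<otimes> y))"
      using z subset by (simp add: mult_mat_sum_left[OF RM[OF z] RM] R_mult subsetD cong: mat_sum_cong)
    also have "\<dots> = mat_sum n M R"
    proof (intro mat_sum_reindex bij_betw_imageI)
      show "inj_on ((\<otimes>) z) M" using z subset by (auto simp: inj_on_def)
      have "x \<in> (\<otimes>) z ` M" if x: "x \<in> M" for x
      proof
        show "x = z \<otimes> (inv z \<otimes> x)" using x z subset by auto
      qed (use x z in auto)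
      then show "(\<otimes>) z ` M = M" using z by auto
    qed
    finally have scaled: "l \<cdot>\<^sub>m R z = l \<cdot>\<^sub>m 1\<^sub>m n"
      using RM[OF z] by (simp add: l mult_smult_distrib[of _ n n _ n])
    show ?thesis
    proof (rule eq_matI)
      fix i j assume "i < dim_row (1\<^sub>m n :: complex mat)" "j < dim_col (1\<^sub>m n :: complex mat)"
      moreover have "(l \<cdot>\<^sub>m R z) $$ (i, j) = (l \<cdot>\<^sub>m 1\<^sub>m n) $$ (i, j)" by (simp only: scaled)
      ultimately show "R z $$ (i, j) = 1\<^sub>m n $$ (i, j)" using RM[OF z] \<open>l \<noteq> 0\<close> by simp
    qed (use RM[OF z] in auto)
  qed
  moreover have "mat_sum n M R = 0\<^sub>m n n" if "l = 0" using that by (intro eq_matI) (auto simp: l)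
  ultimately show ?thesis by blast
qed

lemma normal_mat_sum_nonzero_if_trivial:
  assumes rep: "is_rep G n R" and "n > 0" and M: "M \<lhd> G" and fin: "finite (carrier G)"
    and trivial: "\<forall>z \<in> M. R z = 1\<^sub>m n"
  shows "mat_sum n M R \<noteq> 0\<^sub>m n n"
proof
  interpret normal M G by fact
  assume "mat_sum n M R = 0\<^sub>m n n"
  then have "0 = mat_trace (mat_sum n M R)" by (simp add: mat_trace_def)
  also have "\<dots> = (\<Sum>z \<in> M. mat_trace (R z))"
    using subset is_rep_carrier[OF rep] by (intro mat_trace_mat_sum) auto
  also have "\<dots> = of_nat (card M) * of_nat n" using trivial by (simp add: mat_trace_one)
  finally show False using finite_imp_card_positive[OF fin] \<open>n > 0\<close> by simp
qed

lemma Irr_rel_iff_mat_sum_zero: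
  assumes irr: "irreducible_rep G n R" and M: "M \<lhd> G" and fin: "finite (carrier G)"
  shows "(\<lambda>g. if g \<in> carrier G then mat_trace (R g) else 0) \<in> Irr_rel G M \<longleftrightarrow> mat_sum n M R = 0\<^sub>m n n"
proof -
  interpret normal M G by fact
  have rep: "is_rep G n R" and "n > 0" using irr unfolding irreducible_rep_def by auto
  have "M \<subseteq> char_ker G (\<lambda>g. if g \<in> carrier G then mat_trace (R g) else 0) \<longleftrightarrow> (\<forall>z \<in> M. R z = 1\<^sub>m n)"
  proof
    assume "\<forall>z \<in> M. R z = 1\<^sub>m n"
    then show "M \<subseteq> char_ker G (\<lambda>g. if g \<in> carrier G then mat_trace (R g) else 0)"
      unfolding char_ker_def using subset by (auto simp: is_rep_one[OF rep])
  next
    assume ker: "M \<subseteq> char_ker G (\<lambda>g. if g \<in> carrier G then mat_trace (R g) else 0)"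
    have "mat_trace (R z) = of_nat n" if "z \<in> M" for z
      using that ker subset unfolding char_ker_def by (auto simp: is_rep_one[OF rep] mat_trace_one)
    then have "mat_trace (mat_sum n M R) \<noteq> 0"
      using subset is_rep_carrier[OF rep] finite_imp_card_positive[OF fin] \<open>n > 0\<close>
      by (subst mat_trace_mat_sum) auto
    then show "\<forall>z \<in> M. R z = 1\<^sub>m n"
      using normal_mat_sum_dichotomy[OF irr M] by (auto simp: mat_trace_def)
  qed
  moreover have "(\<lambda>g. if g \<in> carrier G then mat_trace (R g) else 0) \<in> Irr G"
    unfolding Irr_def using irr by blast
  ultimately show ?thesis
    using normal_mat_sum_dichotomy[OF irr M] normal_mat_sum_nonzero_if_trivial[OF rep \<open>n > 0\<close> M fin]
    unfolding Irr_rel_def by blast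
qed

end

section \<open>Centralizers modulo a normal subgroup\<close>

text \<open>The preimage in \<open>G\<close> of the centralizer of \<open>Mg\<close> in \<open>G/M\<close>.\<close>

definition coset_centralizer :: "('a, 'b) monoid_scheme \<Rightarrow> 'a set \<Rightarrow> 'a \<Rightarrow> 'a set" where
  "coset_centralizer G M g = {y \<in> carrier G. inv\<^bsub>G\<^esub> y \<otimes>\<^bsub>G\<^esub> g \<otimes>\<^bsub>G\<^esub> y \<in> g <#\<^bsub>G\<^esub> M}"

context group
begin

lemma rcos_eq_iff:
  assumes M: "subgroup M G" and a: "a \<in> carrier G" and b: "b \<in> carrier G"
  shows "M #> a = M #> b \<longleftrightarrow> a \<otimes> inv b \<in> M"
  using subgroup.rcos_module[OF M is_group b a] rcos_self[OF a M] repr_independence[OF _ b M] by auto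

lemma lcos_mem_iff:
  assumes M: "subgroup M G" and g: "g \<in> carrier G" and y: "y \<in> carrier G"
  shows "y \<in> g <# M \<longleftrightarrow> inv g \<otimes> y \<in> M"
  using subgroup.lcos_module_imp[OF M is_group g] subgroup.lcos_module_rev[OF M is_group g y] by blast

lemma card_Union_rcosets:
  assumes M: "subgroup M G" and fin: "finite (carrier G)" and C: "C \<subseteq> rcosets M"
  shows "card (\<Union>C) = card M * card C"
proof -
  have "finite (rcosets M)" using rcosets_part_G[OF M] fin by (metis finite_Pow_iff finite_UnionD)
  then have "finite C" using C by (rule finite_subset[rotated])
  moreover have "finite (\<Union>C)" using C rcosets_part_G[OF M] fin by (metis Union_mono finite_subset)
  ultimately have "card M * card C = card (\<Union>C)"
  proof (rule card_partition)
    show "c \<in> C \<Longrightarrow> card c = card M" for c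
      using C card_rcosets_equal[OF _ subgroup.subset[OF M]] by auto
    show "c1 \<in> C \<Longrightarrow> c2 \<in> C \<Longrightarrow> c1 \<noteq> c2 \<Longrightarrow> c1 \<inter> c2 = {}" for c1 c2
      using C rcos_disjoint[OF M] unfolding pairwise_def disjnt_def by blast
  qed
  then show ?thesis by simp
qed

lemma rcos_commute_iff:
  assumes M: "M \<lhd> G" and g: "g \<in> carrier G" and x: "x \<in> carrier G"
  shows "(M #> x) <#> (M #> g) = (M #> g) <#> (M #> x) \<longleftrightarrow> inv x \<otimes> g \<otimes> x \<in> g <# M"
proof -
  interpret normal M G by fact
  define w where "w = x \<otimes> g \<otimes> inv (g \<otimes> x)"
  define u where "u = inv g \<otimes> (inv x \<otimes> g \<otimes> x)"
  have w_u: "w = g \<otimes> (x \<otimes> inv u \<otimes> inv x) \<otimes> inv g"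
    unfolding u_def w_def using g x by (simp add: inv_mult_group m_assoc)
  have u_w: "u = inv (inv x \<otimes> (inv g \<otimes> w \<otimes> g) \<otimes> x)"
    unfolding u_def w_def using g x by (simp add: inv_mult_group m_assoc)
  have "(M #> x) <#> (M #> g) = (M #> g) <#> (M #> x) \<longleftrightarrow> M #> (x \<otimes> g) = M #> (g \<otimes> x)"
    using g x by (simp add: rcos_sum)
  also have "\<dots> \<longleftrightarrow> w \<in> M" unfolding w_def using rcos_eq_iff[OF subgroup_axioms] g x by simp
  also have "\<dots> \<longleftrightarrow> u \<in> M"
  proof
    assume "w \<in> M"
    then show "u \<in> M" unfolding u_w using g x by (simp add: inv_op_closed1)
  next
    assume "u \<in> M"
    then show "w \<in> M" unfolding w_u using g x u_def by (simp add: inv_op_closed2)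
  qed
  also have "\<dots> \<longleftrightarrow> inv x \<otimes> g \<otimes> x \<in> g <# M" unfolding u_def using lcos_mem_iff[OF subgroup_axioms g] g x by simp
  finally show ?thesis .
qed

lemma card_coset_centralizer_quotient:
  assumes fin: "finite (carrier G)" and M: "M \<lhd> G" and g: "g \<in> carrier G"
  shows "card (coset_centralizer G M g) = card M * card (centralizer_of (G Mod M) (M #> g))"
proof -
  interpret normal M G by fact
  define C where "C = centralizer_of (G Mod M) (M #> g)"
  have C_eq: "C = {Y \<in> rcosets M. Y <#> (M #> g) = (M #> g) <#> Y}"
    unfolding C_def centralizer_of_def by (simp add: FactGroup_def)
  have mem: "M #> x \<in> C \<longleftrightarrow> x \<in> coset_centralizer G M g" if x: "x \<in> carrier G" for x
    using x rcosetsI[OF subset x] rcos_commute_iff[OF M g x] unfolding C_eq coset_centralizer_def by simp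
  have "coset_centralizer G M g = \<Union>C"
  proof (intro equalityI subsetI)
    fix y assume y: "y \<in> coset_centralizer G M g"
    then have "y \<in> carrier G" unfolding coset_centralizer_def by blast
    then show "y \<in> \<Union>C" using y mem rcos_self[OF _ subgroup_axioms] by blast
  next
    fix y assume "y \<in> \<Union>C"
    then obtain x where x: "x \<in> carrier G" and Y: "M #> x \<in> C" and y: "y \<in> M #> x"
      unfolding C_eq RCOSETS_def by blast
    have y_carrier: "y \<in> carrier G" using x y r_coset_subset_G[OF subset] by blast
    have "M #> y = M #> x" using repr_independence[OF y x subgroup_axioms] by simp
    then show "y \<in> coset_centralizer G M g" using mem[OF y_carrier] Y by simp
  qed
  moreover have "C \<subseteq> rcosets M" unfolding C_eq by blast
  ultimately show ?thesis unfolding C_def by (simp add: card_Union_rcosets[OF subgroup_axioms fin])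
qed

lemma conj_eq_iff_centralizer:
  assumes g: "g \<in> carrier G" and y: "y \<in> carrier G" and z: "z \<in> carrier G"
  shows "inv y \<otimes> g \<otimes> y = inv z \<otimes> g \<otimes> z \<longleftrightarrow> y \<otimes> inv z \<in> centralizer_of G g"
proof -
  have "inv y \<otimes> g \<otimes> y = inv z \<otimes> g \<otimes> z \<longleftrightarrow> y \<otimes> (inv y \<otimes> g \<otimes> y) \<otimes> inv z = y \<otimes> (inv z \<otimes> g \<otimes> z) \<otimes> inv z"
    using g y z by simp
  also have "\<dots> \<longleftrightarrow> (y \<otimes> inv z) \<otimes> g = g \<otimes> (y \<otimes> inv z)"
    using g y z by (simp add: m_assoc eq_commute)
  finally show ?thesis using y z unfolding centralizer_of_def by simp
qed

lemma card_coset_centralizer_conj: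
  assumes fin: "finite (carrier G)" and g: "g \<in> carrier G"
  shows "card (coset_centralizer G M g)
       = card ((\<lambda>y. inv y \<otimes> g \<otimes> y) ` coset_centralizer G M g) * card (centralizer_of G g)"
proof -
  define H where "H = coset_centralizer G M g"
  define \<psi> where "\<psi> y = inv y \<otimes> g \<otimes> y" for y
  define C where "C = centralizer_of G g"
  have H_carrier: "H \<subseteq> carrier G" and C_carrier: "C \<subseteq> carrier G"
    unfolding H_def C_def coset_centralizer_def centralizer_of_def by auto
  have fiber: "{y \<in> H. \<psi> y = \<psi> y0} = (\<lambda>c. c \<otimes> y0) ` C" if y0: "y0 \<in> H" for y0
  proof (intro equalityI subsetI)
    fix y assume "y \<in> {y \<in> H. \<psi> y = \<psi> y0}"
    then have y: "y \<in> carrier G" and y0_carrier: "y0 \<in> carrier G" and eq: "\<psi> y = \<psi> y0"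
      using y0 H_carrier by auto
    then have "y \<otimes> inv y0 \<in> C" using conj_eq_iff_centralizer[OF g] unfolding \<psi>_def C_def by simp
    moreover have "y = (y \<otimes> inv y0) \<otimes> y0" using y y0_carrier by (simp add: m_assoc)
    ultimately show "y \<in> (\<lambda>c. c \<otimes> y0) ` C" by blast
  next
    fix y assume "y \<in> (\<lambda>c. c \<otimes> y0) ` C"
    then obtain c where c: "c \<in> C" and y: "y = c \<otimes> y0" by blast
    have c_carrier: "c \<in> carrier G" and y0_carrier: "y0 \<in> carrier G" using c y0 C_carrier H_carrier by auto
    then have "y \<in> carrier G" and "(c \<otimes> y0) \<otimes> inv y0 \<in> C" using c y by (simp_all add: m_assoc)
    then have "y \<in> carrier G" "\<psi> y = \<psi> y0"
      using y y0_carrier conj_eq_iff_centralizer[OF g] unfolding \<psi>_def C_def by auto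
    then show "y \<in> {y \<in> H. \<psi> y = \<psi> y0}" using y0 unfolding H_def coset_centralizer_def \<psi>_def by auto
  qed
  have card_fiber: "card {y \<in> H. \<psi> y = v} = card C" if "v \<in> \<psi> ` H" for v
  proof -
    obtain y0 where y0: "y0 \<in> H" "v = \<psi> y0" using \<open>v \<in> \<psi> ` H\<close> by blast
    have "inj_on (\<lambda>c. c \<otimes> y0) C"
      using y0 H_carrier C_carrier by (intro inj_onI) (metis r_cancel subsetD)
    then show ?thesis using fiber[OF y0(1)] y0(2) by (simp add: card_image)
  qed
  have "finite H" using H_carrier fin by (rule finite_subset)
  have "H = (\<Union>v \<in> \<psi> ` H. {y \<in> H. \<psi> y = v})" by auto
  also have "card \<dots> = (\<Sum>v \<in> \<psi> ` H. card {y \<in> H. \<psi> y = v})"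
    using \<open>finite H\<close> by (intro card_UN_disjoint) auto
  finally have "card H = (\<Sum>v \<in> \<psi> ` H. card {y \<in> H. \<psi> y = v})" .
  also have "\<dots> = card (\<psi> ` H) * card C" using card_fiber by simp
  finally show ?thesis unfolding H_def \<psi>_def C_def .
qed

lemma conj_coset_iff_centralizer_card:
  assumes fin: "finite (carrier G)" and M: "M \<lhd> G" and g: "g \<in> carrier G"
  shows "(\<forall>h \<in> g <# M. \<exists>x \<in> carrier G. inv x \<otimes> g \<otimes> x = h)
     \<longleftrightarrow> card (centralizer_of G g) = card (centralizer_of (G Mod M) (M #> g))"
proof -
  interpret normal M G by fact
  define H where "H = coset_centralizer G M g"
  define \<psi> where "\<psi> y = inv y \<otimes> g \<otimes> y" for y
  have image: "\<psi> ` H \<subseteq> g <# M" unfolding H_def \<psi>_def coset_centralizer_def by auto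
  have "g <# M \<in> lcosets M" unfolding LCOSETS_def using g by blast
  then have coset_card: "card M = card (g <# M)" by (rule l_card_cosets_equal[OF _ subset fin])
  have "finite (g <# M)" using l_coset_subset_G[OF subset g] fin by (rule finite_subset)
  have "0 < card M" by (rule finite_imp_card_positive[OF fin])
  have "\<one> \<in> centralizer_of G g" "finite (centralizer_of G g)"
    using g fin unfolding centralizer_of_def by auto
  then have "0 < card (centralizer_of G g)" by (auto simp: card_gt_0_iff)
  have "(\<forall>h \<in> g <# M. \<exists>x \<in> carrier G. inv x \<otimes> g \<otimes> x = h) \<longleftrightarrow> g <# M \<subseteq> \<psi> ` H"
    unfolding H_def \<psi>_def coset_centralizer_def by auto
  also have "\<dots> \<longleftrightarrow> card (\<psi> ` H) = card M"
  proof
    assume "g <# M \<subseteq> \<psi> ` H"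
    then show "card (\<psi> ` H) = card M" using image coset_card by (simp add: subset_antisym)
  next
    assume "card (\<psi> ` H) = card M"
    then show "g <# M \<subseteq> \<psi> ` H" using card_subset_eq[OF \<open>finite (g <# M)\<close> image] coset_card by simp
  qed
  also have "\<dots> \<longleftrightarrow> card (centralizer_of G g) = card (centralizer_of (G Mod M) (M #> g))"
  proof -
    have "card (\<psi> ` H) * card (centralizer_of G g) = card M * card (centralizer_of (G Mod M) (M #> g))"
      using card_coset_centralizer_quotient[OF fin M g] card_coset_centralizer_conj[OF fin g, of M]
      unfolding H_def \<psi>_def by simp
    then show ?thesis using \<open>0 < card M\<close> \<open>0 < card (centralizer_of G g)\<close> by auto
  qed
  finally show ?thesis .
qed

end

section \<open>The five conditions\<close>

context group
begin

lemma Irr_rel_vanishes_if_conj_coset: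
  assumes fin: "finite (carrier G)" and M: "M \<lhd> G" and g: "g \<in> carrier G"
    and conj: "\<forall>h \<in> g <# M. \<exists>x \<in> carrier G. inv x \<otimes> g \<otimes> x = h" and \<chi>: "\<chi> \<in> Irr_rel G M"
  shows "\<chi> g = 0"
proof -
  interpret normal M G by fact
  obtain n R where irr: "irreducible_rep G n R" and \<chi>_eq: "\<chi> = (\<lambda>g. if g \<in> carrier G then mat_trace (R g) else 0)"
    using \<chi> unfolding Irr_rel_def Irr_def by blast
  have rep: "is_rep G n R" using irr unfolding irreducible_rep_def by blast
  note R = is_rep_carrier[OF rep] and R_mult = is_rep_mult[OF rep]
  have RM: "\<And>z. z \<in> M \<Longrightarrow> R z \<in> carrier_mat n n" using subset R by auto
  have sum_zero: "mat_sum n M R = 0\<^sub>m n n" using Irr_rel_iff_mat_sum_zero[OF irr M fin] \<chi> \<chi>_eq by simp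
  have "mat_trace (R (g \<otimes> z)) = mat_trace (R g)" if z: "z \<in> M" for z
  proof -
    obtain x where "x \<in> carrier G" "inv x \<otimes> g \<otimes> x = g \<otimes> z"
      using conj z unfolding l_coset_def by blast
    then show ?thesis using mat_trace_rep_conj[OF rep g] by metis
  qed
  then have "of_nat (card M) * mat_trace (R g) = (\<Sum>z \<in> M. mat_trace (R g * R z))"
    using g subset by (simp add: R_mult subsetD)
  also have "\<dots> = mat_trace (R g * mat_sum n M R)"
    using R[OF g] RM by (simp add: mult_mat_sum_left mat_trace_mat_sum)
  also have "\<dots> = 0" using R[OF g] by (simp add: sum_zero mat_trace_def)
  finally show ?thesis using finite_imp_card_positive[OF fin] g \<chi>_eq by simp
qed

lemma conj_coset_if_Irr_rel_vanishes:
  assumes fin: "finite (carrier G)" and M: "M \<lhd> G" and N: "subgroup N G" and MN: "M \<subseteq> N"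
    and vanish: "\<forall>g \<in> carrier G - N. \<forall>\<chi> \<in> Irr_rel G M. \<chi> g = 0"
    and g: "g \<in> carrier G - N" and h: "h \<in> g <# M"
  shows "\<exists>x \<in> carrier G. inv x \<otimes> g \<otimes> x = h"
proof -
  interpret normal M G by fact
  obtain z where z: "z \<in> M" and h_eq: "h = g \<otimes> z" using h unfolding l_coset_def by blast
  have g_carrier: "g \<in> carrier G" and z_carrier: "z \<in> carrier G" using g z subset by auto
  then have h_carrier: "h \<in> carrier G" using h_eq by simp
  have "h \<notin> N"
  proof
    assume "h \<in> N"
    moreover have "inv z \<in> N" using z MN subgroup.m_inv_closed[OF N] by blast
    ultimately have "h \<otimes> inv z \<in> N" by (rule subgroup.m_closed[OF N])
    moreover have "h \<otimes> inv z = g" using g_carrier z_carrier h_eq by (simp add: m_assoc)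
    ultimately show False using g by simp
  qed
  have "h \<in> conj_class G g"
  proof (rule irreducible_chars_separate_classes[OF fin g_carrier h_carrier])
    fix n R assume irr: "irreducible_rep G n R"
    have rep: "is_rep G n R" using irr unfolding irreducible_rep_def by blast
    show "mat_trace (R g) = mat_trace (R h)"
    proof (cases "mat_sum n M R = 0\<^sub>m n n")
      case True
      then have \<chi>: "(\<lambda>g. if g \<in> carrier G then mat_trace (R g) else 0) \<in> Irr_rel G M"
        using Irr_rel_iff_mat_sum_zero[OF irr M fin] by simp
      have "h \<in> carrier G - N" using h_carrier \<open>h \<notin> N\<close> by blast
      then show ?thesis using vanish[rule_format, OF g \<chi>] vanish[rule_format, OF _ \<chi>] g_carrier h_carrier by simp
    next
      case False
      then have "R z = 1\<^sub>m n" using normal_mat_sum_dichotomy[OF irr M] z by blast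
      then show ?thesis
        using h_eq is_rep_mult[OF rep g_carrier z_carrier] right_mult_one_mat[OF is_rep_carrier[OF rep g_carrier]]
        by simp
    qed
  qed
  then show ?thesis unfolding conj_class_def by blast
qed

lemma conj_coset_iff_commutator:
  assumes g: "g \<in> carrier G" and M: "M \<subseteq> carrier G"
  shows "(\<forall>h \<in> g <# M. \<exists>x \<in> carrier G. inv x \<otimes> g \<otimes> x = h)
     \<longleftrightarrow> (\<forall>z \<in> M. \<exists>y \<in> carrier G. commutator_el G g y = z)"
proof -
  have conj: "inv y \<otimes> g \<otimes> y = g \<otimes> commutator_el G g y" if "y \<in> carrier G" for y
    using that g by (simp add: commutator_el_def m_assoc)
  have "inv y \<otimes> g \<otimes> y = g \<otimes> z \<longleftrightarrow> commutator_el G g y = z" if "y \<in> carrier G" "z \<in> carrier G" for y z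
    using that g by (simp add: conj commutator_el_def)
  note iff = this
  show ?thesis
  proof (intro iffI ballI)
    fix z assume "\<forall>h \<in> g <# M. \<exists>x \<in> carrier G. inv x \<otimes> g \<otimes> x = h" and z: "z \<in> M"
    then obtain y where y: "y \<in> carrier G" "inv y \<otimes> g \<otimes> y = g \<otimes> z" unfolding l_coset_def by blast
    then have "commutator_el G g y = z" using iff[of y z] z M by blast
    then show "\<exists>y \<in> carrier G. commutator_el G g y = z" using y by blast
  next
    fix h assume comm: "\<forall>z \<in> M. \<exists>y \<in> carrier G. commutator_el G g y = z" and "h \<in> g <# M"
    then obtain z where z: "z \<in> M" and h: "h = g \<otimes> z" unfolding l_coset_def by blast
    then obtain y where y: "y \<in> carrier G" "commutator_el G g y = z" using comm by blast
    then have "inv y \<otimes> g \<otimes> y = h" using iff[of y z] z h M by blast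
    then show "\<exists>x \<in> carrier G. inv x \<otimes> g \<otimes> x = h" using y by blast
  qed
qed

lemma vanishing_off_subset_iff:
  assumes N: "subgroup N G"
  shows "vanishing_off G M \<subseteq> N \<longleftrightarrow> (\<forall>g \<in> carrier G - N. \<forall>\<chi> \<in> Irr_rel G M. \<chi> g = 0)"
proof
  assume V: "vanishing_off G M \<subseteq> N"
  show "\<forall>g \<in> carrier G - N. \<forall>\<chi> \<in> Irr_rel G M. \<chi> g = 0"
  proof (intro ballI, rule ccontr)
    fix g \<chi> assume g: "g \<in> carrier G - N" and "\<chi> \<in> Irr_rel G M" and "\<chi> g \<noteq> 0"
    then have "g \<in> {g \<in> carrier G. \<exists>\<chi> \<in> Irr_rel G M. \<chi> g \<noteq> 0}" by blast
    then have "g \<in> vanishing_off G M" unfolding vanishing_off_def by (rule generate.incl)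
    then show False using V g by blast
  qed
next
  assume "\<forall>g \<in> carrier G - N. \<forall>\<chi> \<in> Irr_rel G M. \<chi> g = 0"
  then have "{g \<in> carrier G. \<exists>\<chi> \<in> Irr_rel G M. \<chi> g \<noteq> 0} \<subseteq> N" by blast
  then show "vanishing_off G M \<subseteq> N" unfolding vanishing_off_def by (rule generate_subgroup_incl[OF _ N])
qed

lemma conj_cosets_iff_centralizer_cards:
  assumes fin: "finite (carrier G)" and M: "M \<lhd> G"
  shows "(\<forall>g \<in> carrier G - N. \<forall>h \<in> g <# M. \<exists>x \<in> carrier G. inv x \<otimes> g \<otimes> x = h)
     \<longleftrightarrow> (\<forall>g \<in> carrier G - N. card (centralizer_of G g) = card (centralizer_of (G Mod M) (M #> g)))"
  using conj_coset_iff_centralizer_card[OF fin M] by (rule ball_cong[OF refl]) blast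

lemma conj_cosets_iff_commutators:
  assumes "M \<subseteq> carrier G"
  shows "(\<forall>g \<in> carrier G - N. \<forall>h \<in> g <# M. \<exists>x \<in> carrier G. inv x \<otimes> g \<otimes> x = h)
     \<longleftrightarrow> (\<forall>g \<in> carrier G - N. \<forall>z \<in> M. \<exists>y \<in> carrier G. commutator_el G g y = z)"
  using conj_coset_iff_commutator[OF _ assms] by (rule ball_cong[OF refl]) blast

lemma conj_cosets_iff_Irr_rel_vanish:
  assumes fin: "finite (carrier G)" and M: "M \<lhd> G" and N: "subgroup N G" and MN: "M \<subseteq> N"
  shows "(\<forall>g \<in> carrier G - N. \<forall>h \<in> g <# M. \<exists>x \<in> carrier G. inv x \<otimes> g \<otimes> x = h)
     \<longleftrightarrow> (\<forall>g \<in> carrier G - N. \<forall>\<chi> \<in> Irr_rel G M. \<chi> g = 0)"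
proof (intro iffI ballI)
  fix g \<chi> assume "\<forall>g \<in> carrier G - N. \<forall>h \<in> g <# M. \<exists>x \<in> carrier G. inv x \<otimes> g \<otimes> x = h"
    and "g \<in> carrier G - N" and "\<chi> \<in> Irr_rel G M"
  then show "\<chi> g = 0" using Irr_rel_vanishes_if_conj_coset[OF fin M] by blast
next
  fix g h assume "\<forall>g \<in> carrier G - N. \<forall>\<chi> \<in> Irr_rel G M. \<chi> g = 0"
    and "g \<in> carrier G - N" and "h \<in> g <# M"
  then show "\<exists>x \<in> carrier G. inv x \<otimes> g \<otimes> x = h" by (rule conj_coset_if_Irr_rel_vanishes[OF fin M N MN])
qed

end

theorem mainTheorem6:
  fixes G :: "('a, 'b) monoid_scheme" and M N :: "'a set"
  assumes "group G" and "finite (carrier G)"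
    and "M \<lhd> G" and "N \<lhd> G"
    and "M \<noteq> {\<one>\<^bsub>G\<^esub>}" and "M \<subset> N"
  shows "((\<forall>g \<in> carrier G - N. \<forall>h \<in> g <#\<^bsub>G\<^esub> M.
             \<exists>x \<in> carrier G. inv\<^bsub>G\<^esub> x \<otimes>\<^bsub>G\<^esub> g \<otimes>\<^bsub>G\<^esub> x = h)
       \<longleftrightarrow> (\<forall>g \<in> carrier G - N.
             card (centralizer_of G g) = card (centralizer_of (G Mod M) (M #>\<^bsub>G\<^esub> g))))
     \<and> ((\<forall>g \<in> carrier G - N.
             card (centralizer_of G g) = card (centralizer_of (G Mod M) (M #>\<^bsub>G\<^esub> g)))
       \<longleftrightarrow> (\<forall>g \<in> carrier G - N. \<forall>\<chi> \<in> Irr_rel G M. \<chi> g = 0))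
     \<and> ((\<forall>g \<in> carrier G - N. \<forall>\<chi> \<in> Irr_rel G M. \<chi> g = 0)
       \<longleftrightarrow> vanishing_off G M \<subseteq> N)
     \<and> (vanishing_off G M \<subseteq> N
       \<longleftrightarrow> (\<forall>g \<in> carrier G - N. \<forall>z \<in> M. \<exists>y \<in> carrier G. commutator_el G g y = z))"
proof -
  interpret group G by fact
  note fin = \<open>finite (carrier G)\<close> and M = \<open>M \<lhd> G\<close>
  have N: "subgroup N G" using \<open>N \<lhd> G\<close> normal_imp_subgroup by blast
  have MN: "M \<subseteq> N" using \<open>M \<subset> N\<close> by blast
  have M_carrier: "M \<subseteq> carrier G" using M normal_imp_subgroup subgroup.subset by blast
  show ?thesis
    using conj_cosets_iff_centralizer_cards[OF fin M, of N] conj_cosets_iff_Irr_rel_vanish[OF fin M N MN]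
      vanishing_off_subset_iff[OF N, of M] conj_cosets_iff_commutators[OF M_carrier, of N]
    by argo
qed

end
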